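(* Let $\Xi$ be an orthogonal constructor rewrite system (with call-by-value rewriting) over a finite signature with constructors $\mathbf{c}_1,\dots,\mathbf{c}_g$ and function symbols $\mathbf{f}_1,\dots,\mathbf{f}_h$. Then there are $\lambda$-terms $F_{\mathbf{f}}$, one for each function symbol $\mathbf{f}$, and a natural number $k$ such that for every function symbol $\mathbf{f}$ of arity $a$ and all constructor terms $t_1,\dots,t_a$, writing $u=\mathbf{f}(t_1,\dots,t_a)$ and $M=F_{\mathbf{f}}\lceil t_1\rceil\cdots\lceil t_a\rceil$: (i) if $u$ rewrites to a constructor term $v$ in $n$ steps, then $M\rightarrow_v^{j}\lceil v\rceil$ for some $j\le kn$; (ii) if $u$ rewrites to a normal form $v$ that is not a constructor term, then $M\rightarrow_v^*\bot$; (iii) if $u$ diverges (admits an infinite rewrite sequence), then $M$ diverges (admits an infinite $\rightarrow_v$-sequence).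
   Context: A constructor rewrite system consists of a signature whose symbols are constructors or function symbols (each with an arity), and rules $\mathbf{f}(p_1,\dots,p_n)\rightarrow t$ where $\mathbf{f}$ is a function symbol, the patterns $p_i$ are built from constructors and variables, and $t$ is a term built from constructors, function symbols and variables. Orthogonal means no two distinct rules overlap and every variable occurs at most once in each left-hand side. Constructor terms are closed terms built only from constructors. Rewriting is call-by-value: a step replaces, anywhere in a term, an instance $l\sigma$ of a left-hand side by $r\sigma$, where $\sigma$ maps variables to constructor terms. A normal form is a term to which no step applies. $\lambda$-terms are $M::=x\mid\lambda x.M\mid MN$; values are $V::=x\mid\lambda x.M$. Weak call-by-value reduction $\rightarrow_v$ is the smallest relation with $(\lambda x.M)V\rightarrow_v M\{V/x\}$ for values $V$ and closed under $M\rightarrow_v N\Rightarrow ML\rightarrow_v NL$ and $LM\rightarrow_v LN$ (no reduction under $\lambda$). Scott encoding of constructor terms: $\lceil \mathbf{c}_i(t_1,\dots,t_n)\rceil=\lambda x_1.\cdots\lambda x_g.\lambda y.\,x_i\lceil t_1\rceil\cdots\lceil t_n\rceil$. The error term is $\bot=\lambda x_1.\cdots\lambda x_g.\lambda y.\,y$. *)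

theory Defs
  imports Main
begin

text \<open>Terms over a signature whose constructors are numbered 0..g-1 (paper: c_1..c_g)
 and function symbols 0..h-1 (paper: f_1..f_h); arities given by carity / farity.\<close>

datatype 'v rterm = RVar 'v | Con nat "'v rterm list" | Fun nat "'v rterm list"

fun rvars :: "'v rterm \<Rightarrow> 'v list" where
  "rvars (RVar x) = [x]"
| "rvars (Con c ts) = concat (map rvars ts)"
| "rvars (Fun f ts) = concat (map rvars ts)"

fun rsubst :: "('v \<Rightarrow> 'v rterm) \<Rightarrow> 'v rterm \<Rightarrow> 'v rterm" where
  "rsubst \<sigma> (RVar x) = \<sigma> x"
| "rsubst \<sigma> (Con c ts) = Con c (map (rsubst \<sigma>) ts)"
| "rsubst \<sigma> (Fun f ts) = Fun f (map (rsubst \<sigma>) ts)"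

fun wf_term :: "nat \<Rightarrow> nat \<Rightarrow> (nat \<Rightarrow> nat) \<Rightarrow> (nat \<Rightarrow> nat) \<Rightarrow> 'v rterm \<Rightarrow> bool" where
  "wf_term g h ca fa (RVar x) = True"
| "wf_term g h ca fa (Con c ts) = (c < g \<and> length ts = ca c \<and> (\<forall>t\<in>set ts. wf_term g h ca fa t))"
| "wf_term g h ca fa (Fun f ts) = (f < h \<and> length ts = fa f \<and> (\<forall>t\<in>set ts. wf_term g h ca fa t))"

fun is_pattern :: "nat \<Rightarrow> (nat \<Rightarrow> nat) \<Rightarrow> 'v rterm \<Rightarrow> bool" where
  "is_pattern g ca (RVar x) = True"
| "is_pattern g ca (Con c ts) = (c < g \<and> length ts = ca c \<and> (\<forall>t\<in>set ts. is_pattern g ca t))"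
| "is_pattern g ca (Fun f ts) = False"

fun is_cterm :: "nat \<Rightarrow> (nat \<Rightarrow> nat) \<Rightarrow> 'v rterm \<Rightarrow> bool" where
  "is_cterm g ca (RVar x) = False"
| "is_cterm g ca (Con c ts) = (c < g \<and> length ts = ca c \<and> (\<forall>t\<in>set ts. is_cterm g ca t))"
| "is_cterm g ca (Fun f ts) = False"

text \<open>A rule  f(p_1,...,p_n) \<rightarrow> t  is represented as (f, [p_1,...,p_n], t).\<close>
type_synonym 'v rule = "nat \<times> 'v rterm list \<times> 'v rterm"

definition wf_rule :: "nat \<Rightarrow> nat \<Rightarrow> (nat \<Rightarrow> nat) \<Rightarrow> (nat \<Rightarrow> nat) \<Rightarrow> 'v rule \<Rightarrow> bool" where
  "wf_rule g h ca fa \<rho> = (case \<rho> of (f, ps, r) \<Rightarrow>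
     f < h \<and> length ps = fa f \<and> (\<forall>p\<in>set ps. is_pattern g ca p) \<and>
     wf_term g h ca fa r \<and> set (rvars r) \<subseteq> (\<Union>p\<in>set ps. set (rvars p)))"

definition constructor_trs :: "nat \<Rightarrow> nat \<Rightarrow> (nat \<Rightarrow> nat) \<Rightarrow> (nat \<Rightarrow> nat) \<Rightarrow> 'v rule list \<Rightarrow> bool" where
  "constructor_trs g h ca fa R = (\<forall>\<rho>\<in>set R. wf_rule g h ca fa \<rho>)"

text \<open>Orthogonality: left-linear and no two distinct rules overlap. In a constructor
 system overlaps can only occur at the root, i.e. two left-hand sides are unifiable
 (after renaming apart).\<close>
definition orthogonal :: "'v rule list \<Rightarrow> bool" where
  "orthogonal R =
    ((\<forall>(f, ps, r)\<in>set R. distinct (concat (map rvars ps))) \<and>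
     (\<forall>i j. i < length R \<and> j < length R \<and> i \<noteq> j \<longrightarrow>
        \<not> (\<exists>\<sigma>1 \<sigma>2. Fun (fst (R ! i)) (map (rsubst \<sigma>1) (fst (snd (R ! i)))) =
                   Fun (fst (R ! j)) (map (rsubst \<sigma>2) (fst (snd (R ! j)))))))"

text \<open>Call-by-value rewriting: substitutions map variables to constructor terms;
 steps may take place anywhere in the term.\<close>
inductive cbv_step :: "nat \<Rightarrow> (nat \<Rightarrow> nat) \<Rightarrow> 'v rule list \<Rightarrow> 'v rterm \<Rightarrow> 'v rterm \<Rightarrow> bool"
  for g ca R where
  root: "(f, ps, r) \<in> set R \<Longrightarrow> (\<forall>x. is_cterm g ca (\<sigma> x)) \<Longrightarrow>
         cbv_step g ca R (Fun f (map (rsubst \<sigma>) ps)) (rsubst \<sigma> r)"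
| ctxt_con: "i < length ts \<Longrightarrow> cbv_step g ca R (ts ! i) t' \<Longrightarrow>
         cbv_step g ca R (Con c ts) (Con c (ts[i := t']))"
| ctxt_fun: "i < length ts \<Longrightarrow> cbv_step g ca R (ts ! i) t' \<Longrightarrow>
         cbv_step g ca R (Fun f ts) (Fun f (ts[i := t']))"

definition rnormal :: "nat \<Rightarrow> (nat \<Rightarrow> nat) \<Rightarrow> 'v rule list \<Rightarrow> 'v rterm \<Rightarrow> bool" where
  "rnormal g ca R t = (\<nexists>t'. cbv_step g ca R t t')"

datatype lterm = LVar nat | Abs lterm | App lterm lterm

fun lift :: "nat \<Rightarrow> lterm \<Rightarrow> lterm" where
  "lift k (LVar i) = (if i < k then LVar i else LVar (Suc i))"
| "lift k (Abs M) = Abs (lift (Suc k) M)"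
| "lift k (App M N) = App (lift k M) (lift k N)"

fun subst :: "lterm \<Rightarrow> nat \<Rightarrow> lterm \<Rightarrow> lterm" where
  "subst (LVar i) k N = (if k < i then LVar (i - 1) else if i = k then N else LVar i)"
| "subst (Abs M) k N = Abs (subst M (Suc k) (lift 0 N))"
| "subst (App M1 M2) k N = App (subst M1 k N) (subst M2 k N)"

fun is_value :: "lterm \<Rightarrow> bool" where
  "is_value (LVar i) = True"
| "is_value (Abs M) = True"
| "is_value (App M N) = False"

inductive beta_v :: "lterm \<Rightarrow> lterm \<Rightarrow> bool" where
  beta: "is_value V \<Longrightarrow> beta_v (App (Abs M) V) (subst M 0 V)"
| appL: "beta_v M N \<Longrightarrow> beta_v (App M L) (App N L)"
| appR: "beta_v M N \<Longrightarrow> beta_v (App L M) (App L N)"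

definition abss :: "nat \<Rightarrow> lterm \<Rightarrow> lterm" where
  "abss n M = (Abs ^^ n) M"

definition apps :: "lterm \<Rightarrow> lterm list \<Rightarrow> lterm" where
  "apps M Ns = foldl App M Ns"

text \<open>Scott encoding: constructor c_i (0-based index i) becomes
 \<lambda>x_1...\<lambda>x_g.\<lambda>y. x_(i+1) \<lceil>t_1\<rceil> ... \<lceil>t_n\<rceil>; under g+1 binders x_(i+1) has index g - i.\<close>
fun scott :: "nat \<Rightarrow> 'v rterm \<Rightarrow> lterm" where
  "scott g (Con c ts) = abss (Suc g) (apps (LVar (g - c)) (map (scott g) ts))"
| "scott g (RVar x) = undefined"
| "scott g (Fun f ts) = undefined"

definition bot_term :: "nat \<Rightarrow> lterm" where
  "bot_term g = abss (Suc g) (LVar 0)"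

end

theory Submission
  imports Defs
begin

text \<open>Each function symbol is compiled to a \<lambda>-term that first checks that its arguments are
  encodings of constructor terms (returning \<open>\<bottom>\<close> otherwise) and then tries the rules in turn:
  patterns are matched by Scott case distinctions, matched subterms are extracted by
  projections, and the right-hand side is built from strict constructor code and recursive calls
  through a self-applied dispatcher.

  The compiled term simulates rewriting under the relation \<open>repr\<close>, which allows
  constructor applications that are still unevaluated; their number serves as a potential.
  Every rewrite step is simulated by at least one and, up to the change of potential, at most
  \<open>step_cost\<close> \<open>\<beta>\<^sub>v\<close>-steps, and evaluating a pending constructor costs \<open>con_cost\<close>
  steps. This gives (i) by amortisation and (iii) directly; for (ii), a normal form that is not a
  constructor term contains a call on constructor terms that no rule matches, and its compiled
  code returns \<open>\<bottom>\<close>, which strict constructors propagate.\<close>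

section \<open>Weak call-by-value reduction on closed instances\<close>

fun closed_at :: "nat \<Rightarrow> lterm \<Rightarrow> bool" where
  "closed_at k (LVar i) = (i < k)"
| "closed_at k (Abs M) = closed_at (Suc k) M"
| "closed_at k (App M N) = (closed_at k M \<and> closed_at k N)"

lemma closed_at_mono: "closed_at k M \<Longrightarrow> k \<le> m \<Longrightarrow> closed_at m M"
  by (induction M arbitrary: k m) auto

lemma lift_closed_at: "closed_at k M \<Longrightarrow> k \<le> m \<Longrightarrow> lift m M = M"
  by (induction M arbitrary: k m) auto

lemma subst_closed_at: "closed_at k M \<Longrightarrow> k \<le> m \<Longrightarrow> subst M m N = M"
  by (induction M arbitrary: k m N) auto

text \<open>Compiled code is
  only ever run in environments of closed values, so no lifting is needed, and all reasoning
  about substitution is confined to \<open>subst_inst\<close> below.\<close>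

fun inst :: "(nat \<Rightarrow> lterm) \<Rightarrow> nat \<Rightarrow> lterm \<Rightarrow> lterm" where
  "inst \<rho> k (LVar i) = (if i < k then LVar i else \<rho> (i - k))"
| "inst \<rho> k (Abs M) = Abs (inst \<rho> (Suc k) M)"
| "inst \<rho> k (App M N) = App (inst \<rho> k M) (inst \<rho> k N)"

lemma inst_closed_at: "closed_at k M \<Longrightarrow> k \<le> m \<Longrightarrow> inst \<rho> m M = M"
  by (induction M arbitrary: k m) auto

abbreviation closed_value :: "lterm \<Rightarrow> bool" where
  "closed_value V \<equiv> closed_at 0 V \<and> is_value V"

definition closed_value_env :: "(nat \<Rightarrow> lterm) \<Rightarrow> bool" where
  "closed_value_env \<rho> = (\<forall>i. closed_value (\<rho> i))"

lemma closed_at_inst: "closed_value_env \<rho> \<Longrightarrow> closed_at k (inst \<rho> k M)"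
  by (induction M arbitrary: k) (auto simp: closed_value_env_def intro: closed_at_mono)

definition env_cons :: "lterm \<Rightarrow> (nat \<Rightarrow> lterm) \<Rightarrow> nat \<Rightarrow> lterm" where
  "env_cons V \<rho> i = (case i of 0 \<Rightarrow> V | Suc j \<Rightarrow> \<rho> j)"

lemma closed_value_env_cons:
  "closed_value_env \<rho> \<Longrightarrow> closed_value V \<Longrightarrow> closed_value_env (env_cons V \<rho>)"
  by (auto simp: closed_value_env_def env_cons_def split: nat.split)

lemma subst_inst:
  assumes "closed_value_env \<rho>" "closed_at 0 V"
  shows "subst (inst \<rho> (Suc k) B) k V = inst (env_cons V \<rho>) k B"
  using assms
proof (induction B arbitrary: k)
  case (LVar i)
  consider "i < k" | "i = k" | m where "i - k = Suc m" "i - Suc k = m"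
    by (metis Suc_diff_Suc linorder_neqE_nat)
  then show ?case
  proof cases
    case 3
    then have "closed_at 0 (\<rho> m)" "k < i" using LVar(1) by (auto simp: closed_value_env_def)
    then show ?thesis using 3 by (simp add: env_cons_def subst_closed_at)
  qed (auto simp: env_cons_def)
next
  case (Abs B)
  then show ?case using lift_closed_at[OF Abs(3)] by simp
qed simp

lemma beta_v_inst:
  "closed_value_env \<rho> \<Longrightarrow> closed_value V \<Longrightarrow>
   beta_v (App (inst \<rho> 0 (Abs B)) V) (inst (env_cons V \<rho>) 0 B)"
  using beta_v.beta[of V "inst \<rho> 1 B"] subst_inst[of \<rho> V 0 B] by simp

abbreviation red :: "nat \<Rightarrow> lterm \<Rightarrow> lterm \<Rightarrow> bool" where
  "red j \<equiv> beta_v ^^ j"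

text \<open>Keep \<open>red (Suc n)\<close> folded; the simplifier would otherwise unfold it into relation
  compositions.\<close>

declare relpowp.simps(2) [simp del]

lemma red_1: "beta_v M N \<Longrightarrow> red 1 M N"
  by simp

definition red_le :: "nat \<Rightarrow> lterm \<Rightarrow> lterm \<Rightarrow> bool" where
  "red_le b M N = (\<exists>j\<le>b. red j M N)"

lemma red_le_trans: "red_le a M N \<Longrightarrow> red_le b N P \<Longrightarrow> red_le (a + b) M P"
  unfolding red_le_def by (meson add_le_mono relpowp_trans)

lemma red_le_mono: "red_le a M N \<Longrightarrow> a \<le> b \<Longrightarrow> red_le b M N"
  unfolding red_le_def by (meson order_trans)

lemma red_le_red: "red j M N \<Longrightarrow> j \<le> b \<Longrightarrow> red_le b M N"
  unfolding red_le_def by blast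

lemma red_le_refl: "red_le b M M"
  unfolding red_le_def by (rule exI[of _ 0]) simp

lemma red_appL: "red j M N \<Longrightarrow> red j (App M L) (App N L)"
  by (induction j arbitrary: N) (auto intro: beta_v.appL relpowp_Suc_I elim!: relpowp_Suc_E)

lemma red_appR: "red j M N \<Longrightarrow> red j (App L M) (App L N)"
  by (induction j arbitrary: N) (auto intro: beta_v.appR relpowp_Suc_I elim!: relpowp_Suc_E)

lemma red_le_appL: "red_le j M N \<Longrightarrow> red_le j (App M L) (App N L)"
  unfolding red_le_def using red_appL by blast

lemma red_le_appR: "red_le j M N \<Longrightarrow> red_le j (App L M) (App L N)"
  unfolding red_le_def using red_appR by blast

lemma apps_Nil [simp]: "apps M [] = M" by (simp add: apps_def)
lemma apps_Cons [simp]: "apps M (N # Ns) = apps (App M N) Ns" by (simp add: apps_def)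
lemma apps_snoc [simp]: "apps M (Ns @ [N]) = App (apps M Ns) N" by (simp add: apps_def)

lemma abss_0 [simp]: "abss 0 M = M" by (simp add: abss_def)
lemma abss_Suc [simp]: "abss (Suc n) M = Abs (abss n M)" by (simp add: abss_def)

lemma inst_apps [simp]: "inst \<rho> k (apps M Ns) = apps (inst \<rho> k M) (map (inst \<rho> k) Ns)"
  by (induction Ns arbitrary: M) auto

lemma inst_abss [simp]: "inst \<rho> k (abss n M) = abss n (inst \<rho> (n + k) M)"
  by (induction n arbitrary: k) auto

lemma closed_at_apps [simp]:
  "closed_at k (apps M Ns) = (closed_at k M \<and> (\<forall>N\<in>set Ns. closed_at k N))"
  by (induction Ns arbitrary: M) auto

lemma closed_at_abss [simp]: "closed_at k (abss n M) = closed_at (n + k) M"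
  by (induction n arbitrary: k) auto

lemma is_value_abss: "is_value M \<Longrightarrow> is_value (abss n M)"
  by (cases n) auto

lemma red_apps_head: "red j M M' \<Longrightarrow> red j (apps M Ns) (apps M' Ns)"
  by (induction Ns arbitrary: M M') (auto intro: red_appL)

lemma red_le_apps_head: "red_le j M M' \<Longrightarrow> red_le j (apps M Ns) (apps M' Ns)"
  unfolding red_le_def using red_apps_head by blast

lemma red_apps_arg:
  "i < length Ms \<Longrightarrow> red j (Ms ! i) N \<Longrightarrow> red j (apps H Ms) (apps H (Ms[i := N]))"
  by (induction Ms arbitrary: H i) (auto simp: red_apps_head red_appR split: nat.split)

lemma red_le_apps_args:
  "length Ns = length Ms \<Longrightarrow> length bs = length Ms \<Longrightarrow>
   \<forall>i<length Ms. red_le (bs ! i) (Ms ! i) (Ns ! i) \<Longrightarrow>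
   red_le (sum_list bs) (apps H Ms) (apps H Ns)"
proof (induction Ms arbitrary: H Ns bs)
  case (Cons M Ms)
  obtain N Ns' b bs' where Nb: "Ns = N # Ns'" "bs = b # bs'"
    using Cons.prems(1,2) by (cases Ns; cases bs) auto
  have "red_le (sum_list bs') (apps (App H M) Ms) (apps (App H M) Ns')"
    using Cons.IH[of Ns' bs' "App H M"] Cons.prems Nb by fastforce
  moreover have "red_le b (apps (App H M) Ns') (apps (App H N) Ns')"
    using Cons.prems(3) Nb by (fastforce intro: red_le_apps_head red_le_appR)
  ultimately show ?case using Nb red_le_trans by (fastforce simp: add.commute)
qed (simp add: red_le_refl)

lemma red_le_apps_map:
  assumes "\<forall>t\<in>set ts. \<exists>M q. red_le (s t * V) (C t) M \<and> P t M q \<and> q \<le> s t"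
  obtains Ms qs where "length Ms = length ts" "length qs = length ts"
    "\<forall>i<length ts. P (ts ! i) (Ms ! i) (qs ! i)"
    "red_le (sum_list (map s ts) * V) (apps H (map C ts)) (apps H Ms)" "sum_list qs \<le> sum_list (map s ts)"
proof -
  have "\<exists>Ms qs. length Ms = length ts \<and> length qs = length ts \<and> (\<forall>i<length ts. P (ts ! i) (Ms ! i) (qs ! i)) \<and>
          red_le (sum_list (map s ts) * V) (apps H (map C ts)) (apps H Ms) \<and> sum_list qs \<le> sum_list (map s ts)"
    using assms
  proof (induction ts arbitrary: H)
    case (Cons t ts)
    obtain M q where t: "red_le (s t * V) (C t) M" "P t M q" "q \<le> s t" using Cons.prems by auto
    have "\<forall>t\<in>set ts. \<exists>M q. red_le (s t * V) (C t) M \<and> P t M q \<and> q \<le> s t"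
      using Cons.prems by simp
    then obtain Ms qs where ts: "length Ms = length ts" "length qs = length ts" "\<forall>i<length ts. P (ts ! i) (Ms ! i) (qs ! i)"
      "red_le (sum_list (map s ts) * V) (apps (App H M) (map C ts)) (apps (App H M) Ms)" "sum_list qs \<le> sum_list (map s ts)"
      using Cons.IH[of "App H M"] by blast
    have "red_le (s t * V) (apps H (map C (t # ts))) (apps (App H M) (map C ts))"
      using t(1) by (simp add: red_le_apps_head red_le_appR)
    from red_le_trans[OF this ts(4)] have "red_le (sum_list (map s (t # ts)) * V) (apps H (map C (t # ts))) (apps H (M # Ms))"
      by (simp add: algebra_simps)
    moreover have "\<forall>i<length (t # ts). P ((t # ts) ! i) ((M # Ms) ! i) ((q # qs) ! i)"
      using t(2) ts(3) by (simp add: nth_Cons split: nat.split)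
    ultimately show ?case
      using t(3) ts(1,2,5) by (intro exI[of _ "M # Ms"] exI[of _ "q # qs"]) simp
  qed (simp add: red_le_refl)
  then show ?thesis using that by blast
qed

lemma red_le_apps_args_ex:
  assumes "length Ns = length Ms" "\<forall>i<length Ms. \<exists>b. red_le b (Ms ! i) (Ns ! i)"
  shows "\<exists>b. red_le b (apps H Ms) (apps H Ns)"
proof -
  obtain B where "\<forall>i<length Ms. red_le (B i) (Ms ! i) (Ns ! i)" using assms(2) by metis
  then show ?thesis using red_le_apps_args[OF assms(1), of "map B [0..<length Ms]"] by auto
qed

lemma relpowp_infinite_chain:
  assumes "P x0" "\<And>x. P x \<Longrightarrow> \<exists>y j. 0 < j \<and> (r ^^ j) x y \<and> P y"
  shows "\<exists>s. s 0 = x0 \<and> (\<forall>i. r (s i) (s (Suc i)))"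
proof -
  define Q where "Q x \<longleftrightarrow> (\<exists>y j. (r ^^ j) x y \<and> P y)" for x
  have step: "\<exists>z. r x z \<and> Q z" if q: "Q x" for x
  proof -
    obtain y j where y: "(r ^^ j) x y" "P y" using q unfolding Q_def by blast
    obtain y' j' where y': "0 < j'" "(r ^^ j') y y'" "P y'" using assms(2)[OF y(2)] by blast
    obtain n where "j + j' = Suc n" using y'(1) by (metis add_gr_0 gr0_conv_Suc)
    then obtain z where "r x z" "(r ^^ n) z y'"
      using relpowp_Suc_D2 relpowp_trans[OF y(1) y'(2)] by metis
    then show ?thesis using y'(3) unfolding Q_def by blast
  qed
  have "\<exists>s. \<forall>n. (Q (s n) \<and> (n = 0 \<longrightarrow> s n = x0)) \<and> r (s n) (s (Suc n))"
  proof (rule dependent_nat_choice)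
    show "\<exists>x. Q x \<and> (0 = (0::nat) \<longrightarrow> x = x0)"
      using assms(1) unfolding Q_def by (metis relpowp_0_I)
  qed (use step in auto)
  then show ?thesis by blast
qed

text \<open>\<open>env_push [V\<^sub>1, \<dots>, V\<^sub>n] \<rho>\<close> is the environment after applying \<open>abss n B\<close> to
  \<open>V\<^sub>1 \<dots> V\<^sub>n\<close>: index \<open>0\<close> is bound to the last argument.\<close>

fun env_push :: "lterm list \<Rightarrow> (nat \<Rightarrow> lterm) \<Rightarrow> nat \<Rightarrow> lterm" where
  "env_push [] \<rho> = \<rho>"
| "env_push (V # Vs) \<rho> = env_push Vs (env_cons V \<rho>)"

lemma env_push_nth:
  "env_push Vs \<rho> i = (if i < length Vs then rev Vs ! i else \<rho> (i - length Vs))"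
proof (induction Vs arbitrary: \<rho> i)
  case (Cons V Vs)
  then show ?case
    by (cases "i < length Vs"; cases "i = length Vs")
       (auto simp: nth_append env_cons_def split: nat.split intro!: arg_cong[where f=\<rho>])
qed simp

lemma closed_value_env_push:
  "closed_value_env \<rho> \<Longrightarrow> \<forall>V\<in>set Vs. closed_value V \<Longrightarrow> closed_value_env (env_push Vs \<rho>)"
  by (induction Vs arbitrary: \<rho>) (auto intro: closed_value_env_cons)

lemma red_apps_abss:
  "closed_value_env \<rho> \<Longrightarrow> \<forall>V\<in>set Vs. closed_value V \<Longrightarrow>
   red (length Vs) (apps (inst \<rho> 0 (abss (length Vs) B)) Vs) (inst (env_push Vs \<rho>) 0 B)"
proof (induction Vs arbitrary: \<rho>)
  case (Cons V Vs)
  have "beta_v (App (inst \<rho> 0 (Abs (abss (length Vs) B))) V) (inst (env_cons V \<rho>) 0 (abss (length Vs) B))"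
    using Cons.prems by (intro beta_v_inst) auto
  then have "red 1 (apps (App (inst \<rho> 0 (Abs (abss (length Vs) B))) V) Vs)
                  (apps (inst (env_cons V \<rho>) 0 (abss (length Vs) B)) Vs)"
    by (intro red_apps_head red_1)
  moreover have "red (length Vs) (apps (inst (env_cons V \<rho>) 0 (abss (length Vs) B)) Vs)
                   (inst (env_push Vs (env_cons V \<rho>)) 0 B)"
    using Cons.IH Cons.prems by (auto intro: closed_value_env_cons)
  ultimately show ?case
    using relpowp_trans by (fastforce simp del: inst.simps simp add: inst.simps(2)[symmetric])
qed simp

text \<open>Closed code is written as an instance \<open>inst dummy_env 0 B\<close>, so that
  \<open>red_apps_abss\<close> applies to it; the environment is irrelevant.\<close>

definition dummy_env :: "nat \<Rightarrow> lterm" where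
  "dummy_env = (\<lambda>_. Abs (LVar 0))"

lemma closed_value_env_dummy: "closed_value_env dummy_env"
  by (simp add: closed_value_env_def dummy_env_def)

section \<open>Booleans and conditionals\<close>

definition lam_id :: lterm where "lam_id = Abs (LVar 0)"
definition lam_true :: lterm where "lam_true = Abs (Abs (LVar 1))"
definition lam_false :: lterm where "lam_false = Abs (Abs (LVar 0))"

lemma lam_id_props [simp]: "closed_at k lam_id" "is_value lam_id" "inst \<rho> k lam_id = lam_id"
  by (auto simp: lam_id_def)
lemma lam_true_props [simp]: "closed_at k lam_true" "is_value lam_true" "inst \<rho> k lam_true = lam_true"
  by (auto simp: lam_true_def)
lemma lam_false_props [simp]: "closed_at k lam_false" "is_value lam_false" "inst \<rho> k lam_false = lam_false"
  by (auto simp: lam_false_def)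

text \<open>The branches of \<open>lam_if\<close> are thunks \<open>\<lambda>_. K\<close>, forced with \<open>lam_id\<close>, so that only the
  selected one is evaluated. Code nested in \<open>d\<close> such thunks runs in \<open>thunk_env \<rho> d\<close>.\<close>

definition lam_if :: "lterm \<Rightarrow> lterm \<Rightarrow> lterm \<Rightarrow> lterm" where
  "lam_if B K1 K2 = App (apps B [Abs K1, Abs K2]) lam_id"

definition thunk_env :: "(nat \<Rightarrow> lterm) \<Rightarrow> nat \<Rightarrow> nat \<Rightarrow> lterm" where
  "thunk_env \<rho> d = (env_cons lam_id ^^ d) \<rho>"

lemma thunk_env_0 [simp]: "thunk_env \<rho> 0 = \<rho>"
  by (simp add: thunk_env_def)

lemma thunk_env_add [simp]: "thunk_env \<rho> d (d + k) = \<rho> k"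
  by (induction d arbitrary: k) (auto simp: thunk_env_def env_cons_def)

lemma thunk_env_thunk: "thunk_env (thunk_env \<rho> d) (Suc 0) = thunk_env \<rho> (Suc d)"
  by (simp add: thunk_env_def)

lemma closed_value_env_thunk: "closed_value_env \<rho> \<Longrightarrow> closed_value_env (thunk_env \<rho> d)"
  unfolding thunk_env_def by (induction d) (auto intro: closed_value_env_cons)

lemma red_lam_if:
  assumes "closed_value_env \<rho>" "red_le n (inst \<rho> 0 B) (if b then lam_true else lam_false)"
  shows "red_le (n + 3) (inst \<rho> 0 (lam_if B K1 K2)) (inst (thunk_env \<rho> 1) 0 (if b then K1 else K2))"
proof -
  define K where "K = (if b then K1 else K2)"
  let ?A1 = "inst \<rho> 0 (Abs K1)" and ?A2 = "inst \<rho> 0 (Abs K2)" and ?bool = "if b then lam_true else lam_false"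
  have cl: "\<forall>V\<in>set [?A1, ?A2]. closed_value V"
    using closed_at_inst[OF assms(1)] by auto
  have "red_le n (inst \<rho> 0 (lam_if B K1 K2)) (App (apps ?bool [?A1, ?A2]) lam_id)"
    unfolding lam_if_def using assms(2) by (simp del: apps_Cons add: red_le_appL red_le_apps_head)
  moreover have "red 2 (apps ?bool [?A1, ?A2]) (inst \<rho> 0 (Abs K))"
    using red_apps_abss[OF assms(1) cl, of "LVar (if b then 1 else 0)"] unfolding K_def
    by (cases b) (simp_all add: lam_true_def lam_false_def env_cons_def numeral_2_eq_2 del: apps_Cons)
  then have "red_le 2 (App (apps ?bool [?A1, ?A2]) lam_id) (App (inst \<rho> 0 (Abs K)) lam_id)"
    by (intro red_le_appL red_le_red) auto
  moreover have "beta_v (App (inst \<rho> 0 (Abs K)) lam_id) (inst (thunk_env \<rho> 1) 0 K)"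
    using beta_v_inst[OF assms(1), of lam_id K] by (simp add: thunk_env_def)
  then have "red_le 1 (App (inst \<rho> 0 (Abs K)) lam_id) (inst (thunk_env \<rho> 1) 0 K)"
    by (rule red_le_red[OF red_1]) simp
  ultimately have "red_le (n + 2 + 1) (inst \<rho> 0 (lam_if B K1 K2)) (inst (thunk_env \<rho> 1) 0 K)"
    by (blast intro: red_le_trans)
  moreover have "n + 2 + 1 = n + 3" by simp
  ultimately show ?thesis unfolding K_def by metis
qed

lemmas red_lam_if_true = red_lam_if[where b = True, unfolded if_True]
lemmas red_lam_if_false = red_lam_if[where b = False, unfolded if_False]

section \<open>Matching constructor patterns\<close>

fun matches :: "'v rterm \<Rightarrow> 'v rterm \<Rightarrow> bool" and matches_list :: "'v rterm list \<Rightarrow> 'v rterm list \<Rightarrow> bool" where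
  "matches (RVar x) w = True"
| "matches (Con c qs) (Con c' us) = (c = c' \<and> matches_list qs us)"
| "matches _ _ = False"
| "matches_list [] [] = True"
| "matches_list (q # qs) (u # us) = (matches q u \<and> matches_list qs us)"
| "matches_list _ _ = False"

lemma matches_list_eq: "matches_list qs us = list_all2 matches qs us"
  by (induction qs arbitrary: us) (auto simp: list_all2_Cons1 elim: matches_list.elims)

fun rsize :: "'v rterm \<Rightarrow> nat" where
  "rsize (RVar x) = 1"
| "rsize (Con c ts) = Suc (sum_list (map rsize ts))"
| "rsize (Fun f ts) = Suc (sum_list (map rsize ts))"

lemma rsubst_cong: "\<forall>x\<in>set (rvars t). \<sigma> x = \<sigma>' x \<Longrightarrow> rsubst \<sigma> t = rsubst \<sigma>' t"
  by (induction t) auto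

lemma is_cterm_rsubst: "is_pattern g ca p \<Longrightarrow> \<forall>x. is_cterm g ca (\<sigma> x) \<Longrightarrow> is_cterm g ca (rsubst \<sigma> p)"
  by (induction p) auto

lemma is_cterm_rsubst_var: "is_cterm g ca (rsubst \<sigma> p) \<Longrightarrow> x \<in> set (rvars p) \<Longrightarrow> is_cterm g ca (\<sigma> x)"
  by (induction p) auto

lemma matches_rsubst: "is_pattern g ca p \<Longrightarrow> matches p (rsubst \<sigma> p)"
  by (induction p) (auto simp: matches_list_eq list_all2_conv_all_nth)

lemma rsubst_merge:
  assumes "list_all2 (\<lambda>p w. \<exists>\<sigma>. rsubst \<sigma> p = w) ps ws" "distinct (concat (map rvars ps))"
  shows "\<exists>\<sigma>. map (rsubst \<sigma>) ps = ws"
  using assms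
proof (induction ps ws rule: list_all2_induct)
  case (Cons p ps w ws)
  obtain \<sigma>1 \<sigma>2 where s: "rsubst \<sigma>1 p = w" "map (rsubst \<sigma>2) ps = ws" using Cons by auto
  define \<sigma> where "\<sigma> x = (if x \<in> set (rvars p) then \<sigma>1 x else \<sigma>2 x)" for x
  have "rsubst \<sigma> p = w"
    using s(1) rsubst_cong[of p \<sigma> \<sigma>1] by (simp add: \<sigma>_def)
  moreover have "rsubst \<sigma> q = rsubst \<sigma>2 q" if "q \<in> set ps" for q
  proof (rule rsubst_cong)
    have "set (rvars p) \<inter> set (rvars q) = {}" using Cons.prems that by auto
    then show "\<forall>x\<in>set (rvars q). \<sigma> x = \<sigma>2 x" by (auto simp: \<sigma>_def)
  qed
  then have "map (rsubst \<sigma>) ps = ws" using s(2) by (metis map_eq_conv)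
  ultimately show ?case by auto
qed simp

lemma matches_imp_rsubst: "matches p w \<Longrightarrow> distinct (rvars p) \<Longrightarrow> \<exists>\<sigma>. rsubst \<sigma> p = w"
proof (induction p arbitrary: w)
  case (RVar x)
  then show ?case by (intro exI[of _ "\<lambda>_. w"]) simp
next
  case (Con c qs)
  obtain us where w: "w = Con c us" "list_all2 matches qs us"
    using Con.prems(1) by (cases w) (auto simp: matches_list_eq)
  have "list_all2 (\<lambda>p w. \<exists>\<sigma>. rsubst \<sigma> p = w) qs us"
    unfolding list_all2_conv_all_nth
  proof (intro conjI allI impI)
    show "length qs = length us" using w(2) by (rule list_all2_lengthD)
    fix k assume k: "k < length qs"
    have "matches (qs ! k) (us ! k)" using w(2) k by (simp add: list_all2_conv_all_nth)
    moreover have "distinct (rvars (qs ! k))" using Con.prems(2) k by (simp add: distinct_concat_iff)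
    ultimately show "\<exists>\<sigma>. rsubst \<sigma> (qs ! k) = us ! k" using Con.IH k nth_mem by blast
  qed
  moreover have "distinct (concat (map rvars qs))" using Con.prems(2) by simp
  ultimately obtain \<sigma> where "map (rsubst \<sigma>) qs = us" using rsubst_merge by blast
  then show ?case using w by auto
qed simp

lemma list_matches_imp_rsubst:
  "list_all2 matches ps ws \<Longrightarrow> distinct (concat (map rvars ps)) \<Longrightarrow> \<exists>\<sigma>. map (rsubst \<sigma>) ps = ws"
proof (rule rsubst_merge)
  assume ms: "list_all2 matches ps ws" and d: "distinct (concat (map rvars ps))"
  have "matches (ps ! k) (ws ! k) \<and> distinct (rvars (ps ! k))" if "k < length ps" for k
    using ms d that by (simp add: list_all2_conv_all_nth distinct_concat_iff)
  with ms show "list_all2 (\<lambda>p w. \<exists>\<sigma>. rsubst \<sigma> p = w) ps ws"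
    by (auto simp: list_all2_conv_all_nth intro: matches_imp_rsubst)
qed

text \<open>\<open>var_path \<pi> p x\<close> is the path to the first occurrence of \<open>x\<close> in \<open>p\<close>, as a list of
  (constructor, argument position) pairs from that occurrence up to the root, appended to \<open>\<pi>\<close>.\<close>

fun var_path :: "(nat \<times> nat) list \<Rightarrow> 'v rterm \<Rightarrow> 'v \<Rightarrow> (nat \<times> nat) list option"
and var_paths :: "(nat \<times> nat) list \<Rightarrow> nat \<Rightarrow> nat \<Rightarrow> 'v rterm list \<Rightarrow> 'v \<Rightarrow> (nat \<times> nat) list option" where
  "var_path \<pi> (RVar y) x = (if x = y then Some \<pi> else None)"
| "var_path \<pi> (Con c qs) x = var_paths \<pi> c 0 qs x"
| "var_path \<pi> (Fun f qs) x = None"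
| "var_paths \<pi> c j [] x = None"
| "var_paths \<pi> c j (q # qs) x =
     (case var_path ((c, j) # \<pi>) q x of None \<Rightarrow> var_paths \<pi> c (Suc j) qs x | Some \<pi>' \<Rightarrow> Some \<pi>')"

lemma var_path_None:
  shows "x \<notin> set (rvars p) \<Longrightarrow> var_path \<pi> p x = None"
  and "x \<notin> (\<Union>q\<in>set qs. set (rvars q)) \<Longrightarrow> var_paths \<pi> c j qs x = None"
  by (induction \<pi> p x and \<pi> c j qs x rule: var_path_var_paths.induct) auto

fun var_arg_path :: "nat \<Rightarrow> 'v rterm list \<Rightarrow> 'v \<Rightarrow> (nat \<times> (nat \<times> nat) list) option" where
  "var_arg_path j [] x = None"
| "var_arg_path j (p # ps) x = (case var_path [] p x of None \<Rightarrow> var_arg_path (Suc j) ps x | Some \<pi> \<Rightarrow> Some (j, \<pi>))"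

section \<open>Scott-encoded data\<close>

text \<open>Code that does not depend on the rewrite rules only needs the constructors: there are
  \<open>g\<close> of them, and constructor \<open>c\<close> has arity \<open>ca c\<close>.\<close>

locale constructor_signature =
  fixes g :: nat and ca :: "nat \<Rightarrow> nat"
begin

lemma closed_at_scott: "is_cterm g ca t \<Longrightarrow> closed_at 0 (scott g t)"
  by (induction t) (auto intro: closed_at_mono)

lemma is_value_scott: "is_cterm g ca t \<Longrightarrow> is_value (scott g t)"
  by (cases t) auto

lemma inst_scott [simp]: "is_cterm g ca t \<Longrightarrow> inst \<rho> k (scott g t) = scott g t"
  using closed_at_scott inst_closed_at by blast

lemma bot_term_props [simp]:
  "closed_at k (bot_term g)" "is_value (bot_term g)" "inst \<rho> k (bot_term g) = bot_term g"
  by (auto simp: bot_term_def intro: inst_closed_at)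

lemma is_cterm_Con_cases:
  "is_cterm g ca w \<Longrightarrow> \<exists>c us. w = Con c us \<and> c < g \<and> length us = ca c \<and> (\<forall>u\<in>set us. is_cterm g ca u)"
  by (cases w) auto

lemma red_scott_apps:
  assumes "c < g" "\<forall>u\<in>set us. is_cterm g ca u" "length Bs = Suc g" "\<forall>B\<in>set Bs. closed_value B"
  shows "red (Suc g) (apps (scott g (Con c us)) Bs) (apps (Bs ! c) (map (scott g) us))"
proof -
  let ?X = "apps (LVar (g - c)) (map (scott g) us)"
  have "closed_at (Suc g) ?X" using assms(1,2) by (auto intro: closed_at_mono[OF closed_at_scott])
  then have e: "scott g (Con c us) = inst dummy_env 0 (abss (length Bs) ?X)"
    using inst_closed_at[of "Suc g" ?X "Suc g" dummy_env] assms(3) by simp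
  have "red (length Bs) (apps (inst dummy_env 0 (abss (length Bs) ?X)) Bs) (inst (env_push Bs dummy_env) 0 ?X)"
    by (rule red_apps_abss[OF closed_value_env_dummy assms(4)])
  moreover have "inst (env_push Bs dummy_env) 0 ?X = apps (Bs ! c) (map (scott g) us)"
  proof -
    have "g - c < length Bs" "length Bs - Suc (g - c) = c" using assms by auto
    then show ?thesis using assms by (simp add: env_push_nth rev_nth comp_def cong: map_cong)
  qed
  ultimately show ?thesis using e assms(3) by simp
qed

lemma red_bot_apps:
  assumes "length As = g" "\<forall>B\<in>set (As @ [Y]). closed_value B"
  shows "red (Suc g) (apps (bot_term g) (As @ [Y])) Y"
proof -
  have "bot_term g = inst dummy_env 0 (abss (length (As @ [Y])) (LVar 0))"
    using assms(1) by (simp add: bot_term_def)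
  then show ?thesis
    using red_apps_abss[OF closed_value_env_dummy assms(2), of "LVar 0"] assms(1)
    by (simp add: env_push_nth del: apps_snoc)
qed

text \<open>\<open>scott_case B Y\<close> is a case distinction on a Scott-encoded datum: the branch \<open>B c\<close>
  receives the \<open>ca c\<close> arguments of constructor \<open>c\<close> as its free indices, and \<open>Y\<close> is the
  result on \<open>\<bottom>\<close>.\<close>

definition case_branches :: "(nat \<Rightarrow> lterm) \<Rightarrow> lterm \<Rightarrow> lterm list" where
  "case_branches B Y = map (\<lambda>c. abss (ca c) (B c)) [0..<g] @ [Y]"

definition scott_case :: "(nat \<Rightarrow> lterm) \<Rightarrow> lterm \<Rightarrow> lterm" where
  "scott_case B Y = Abs (apps (LVar 0) (case_branches B Y))"

definition closed_branches :: "(nat \<Rightarrow> lterm) \<Rightarrow> lterm \<Rightarrow> bool" where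
  "closed_branches B Y = ((\<forall>c<g. closed_at (ca c) (B c) \<and> is_value (B c)) \<and> closed_value Y)"

lemma closed_case_branches:
  "closed_branches B Y \<Longrightarrow> \<forall>V\<in>set (case_branches B Y). closed_value V"
  by (auto simp: closed_branches_def case_branches_def intro: is_value_abss)

lemma closed_at_scott_case: "closed_branches B Y \<Longrightarrow> closed_at k (scott_case B Y)"
  using closed_case_branches[of B Y] by (auto simp: scott_case_def intro: closed_at_mono)

lemma red_scott_case_apply:
  assumes "closed_branches B Y" "closed_value V"
  shows "red 1 (App (scott_case B Y) V) (apps V (case_branches B Y))"
proof -
  have "map (inst (env_cons V dummy_env) 0) (case_branches B Y) = case_branches B Y"
    using closed_case_branches[OF assms(1)] by (intro map_idI) (metis inst_closed_at le0)
  then have "beta_v (App (inst dummy_env 0 (scott_case B Y)) V) (apps V (case_branches B Y))"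
    using beta_v_inst[OF closed_value_env_dummy assms(2), of "apps (LVar 0) (case_branches B Y)"]
    unfolding scott_case_def by (simp add: env_cons_def del: inst.simps(2))
  then show ?thesis
    using closed_at_scott_case[OF assms(1)] inst_closed_at le0 red_1 by metis
qed

lemma red_scott_case_scott:
  assumes "closed_branches B Y" "c < g" "\<forall>u\<in>set us. is_cterm g ca u" "length us = ca c"
  shows "red (1 + Suc g + ca c) (App (scott_case B Y) (scott g (Con c us)))
            (inst (env_push (map (scott g) us) dummy_env) 0 (B c))"
proof -
  let ?V = "scott g (Con c us)" and ?Bs = "case_branches B Y"
  have "is_cterm g ca (Con c us)" using assms(2-4) by simp
  then have s1: "red 1 (App (scott_case B Y) ?V) (apps ?V ?Bs)"
    using red_scott_case_apply[OF assms(1)] closed_at_scott is_value_scott by blast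
  have s2: "red (Suc g) (apps ?V ?Bs) (apps (?Bs ! c) (map (scott g) us))"
    by (rule red_scott_apps[OF assms(2,3) _ closed_case_branches[OF assms(1)]])
       (simp add: case_branches_def)
  have "closed_at 0 (abss (ca c) (B c))" using assms(1,2) by (simp add: closed_branches_def)
  then have "?Bs ! c = inst dummy_env 0 (abss (length (map (scott g) us)) (B c))"
    using assms(2,4) inst_closed_at[of 0 "abss (ca c) (B c)" 0 dummy_env]
    by (simp add: case_branches_def nth_append)
  moreover have "\<forall>V\<in>set (map (scott g) us). closed_value V"
    using assms(3) closed_at_scott is_value_scott by auto
  ultimately have s3: "red (ca c) (apps (?Bs ! c) (map (scott g) us))
                   (inst (env_push (map (scott g) us) dummy_env) 0 (B c))"
    using red_apps_abss[OF closed_value_env_dummy, of "map (scott g) us" "B c"] assms(4) by simp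
  show ?thesis using relpowp_trans[OF relpowp_trans[OF s1 s2] s3] by simp
qed

lemma red_scott_case_bot:
  assumes "closed_branches B Y"
  shows "red (Suc (Suc g)) (App (scott_case B Y) (bot_term g)) Y"
proof -
  have "red (Suc g) (apps (bot_term g) (case_branches B Y)) Y"
    using closed_case_branches[OF assms] unfolding case_branches_def by (intro red_bot_apps) simp_all
  with relpowp_trans[OF red_scott_case_apply[OF assms]] show ?thesis by fastforce
qed

definition bot_test :: lterm where
  "bot_test = scott_case (\<lambda>_. lam_false) lam_true"

definition con_test :: "nat \<Rightarrow> lterm" where
  "con_test c = scott_case (\<lambda>c'. if c' = c then lam_true else lam_false) lam_false"

definition con_proj :: "nat \<Rightarrow> nat \<Rightarrow> lterm" where
  "con_proj c i = scott_case (\<lambda>c'. if c' = c \<and> i < ca c then LVar (ca c - Suc i) else lam_id) lam_id"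

lemma closed_branches_bot_test: "closed_branches (\<lambda>_. lam_false) lam_true"
  by (simp add: closed_branches_def)

lemma closed_branches_con_test: "closed_branches (\<lambda>c'. if c' = c then lam_true else lam_false) lam_false"
  by (simp add: closed_branches_def)

lemma closed_branches_con_proj:
  "closed_branches (\<lambda>c'. if c' = c \<and> i < ca c then LVar (ca c - Suc i) else lam_id) lam_id"
  by (auto simp: closed_branches_def)

lemma inst_bot_test [simp]: "inst \<rho> k bot_test = bot_test"
  unfolding bot_test_def by (rule inst_closed_at[OF closed_at_scott_case[OF closed_branches_bot_test, of 0]]) simp

lemma inst_con_test [simp]: "inst \<rho> k (con_test c) = con_test c"
  unfolding con_test_def by (rule inst_closed_at[OF closed_at_scott_case[OF closed_branches_con_test, of 0]]) simp

lemma inst_con_proj [simp]: "inst \<rho> k (con_proj c i) = con_proj c i"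
  unfolding con_proj_def by (rule inst_closed_at[OF closed_at_scott_case[OF closed_branches_con_proj, of 0]]) simp

definition arity_sum :: nat where
  "arity_sum = (\<Sum>c<g. ca c)"

text \<open>A case distinction on an encoding takes at most \<open>g + 2 + ca c\<close> steps; together with the
  three steps of \<open>lam_if\<close> this is bounded by \<open>case_cost\<close>.\<close>

definition case_cost :: nat where
  "case_cost = g + 5 + arity_sum"

lemma carity_le_arity_sum: "c < g \<Longrightarrow> ca c \<le> arity_sum"
  unfolding arity_sum_def by (rule member_le_sum) auto

lemma red_bot_test_scott:
  "is_cterm g ca w \<Longrightarrow> \<exists>j. j + 3 \<le> case_cost \<and> red j (App bot_test (scott g w)) lam_false"
proof -
  assume "is_cterm g ca w"
  then obtain c us where w: "w = Con c us" "c < g" "length us = ca c" "\<forall>u\<in>set us. is_cterm g ca u"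
    using is_cterm_Con_cases by blast
  have "red (1 + Suc g + ca c) (App bot_test (scott g w)) lam_false"
    using red_scott_case_scott[OF closed_branches_bot_test w(2,4,3)] w(1)
    unfolding bot_test_def by (simp del: scott.simps)
  moreover have "1 + Suc g + ca c + 3 \<le> case_cost"
    using carity_le_arity_sum[OF w(2)] by (simp add: case_cost_def)
  ultimately show ?thesis by blast
qed

lemma red_bot_test_bot: "red (Suc (Suc g)) (App bot_test (bot_term g)) lam_true"
  unfolding bot_test_def by (rule red_scott_case_bot[OF closed_branches_bot_test])

lemma red_con_test_scott:
  "c' < g \<Longrightarrow> \<forall>u\<in>set us. is_cterm g ca u \<Longrightarrow> length us = ca c' \<Longrightarrow>
   \<exists>j. j + 3 \<le> case_cost \<and> red j (App (con_test c) (scott g (Con c' us))) (if c' = c then lam_true else lam_false)"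
proof -
  assume w: "c' < g" "\<forall>u\<in>set us. is_cterm g ca u" "length us = ca c'"
  have "red (1 + Suc g + ca c') (App (con_test c) (scott g (Con c' us))) (if c' = c then lam_true else lam_false)"
    using red_scott_case_scott[OF closed_branches_con_test w, of c]
    unfolding con_test_def by (cases "c' = c") (simp_all del: scott.simps)
  moreover have "1 + Suc g + ca c' + 3 \<le> case_cost"
    using carity_le_arity_sum[OF w(1)] by (simp add: case_cost_def)
  ultimately show ?thesis by blast
qed

lemma red_con_proj_scott:
  assumes "c < g" "\<forall>u\<in>set us. is_cterm g ca u" "length us = ca c" "i < ca c"
  shows "red_le case_cost (App (con_proj c i) (scott g (Con c us))) (scott g (us ! i))"
proof -
  have "red (1 + Suc g + ca c) (App (con_proj c i) (scott g (Con c us)))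
          (inst (env_push (map (scott g) us) dummy_env) 0 (LVar (ca c - Suc i)))"
    using red_scott_case_scott[OF closed_branches_con_proj[of c i] assms(1-3)] assms(4)
    unfolding con_proj_def by (simp del: scott.simps inst.simps)
  moreover have "inst (env_push (map (scott g) us) dummy_env) 0 (LVar (ca c - Suc i)) = scott g (us ! i)"
    using assms by (simp add: env_push_nth rev_nth)
  moreover have "1 + Suc g + ca c \<le> case_cost"
    using carity_le_arity_sum[OF assms(1)] by (simp add: case_cost_def)
  ultimately show ?thesis by (auto intro: red_le_red)
qed

section \<open>Strict constructors\<close>

definition result :: "'v rterm \<Rightarrow> lterm" where
  "result t = (if is_cterm g ca t then scott g t else bot_term g)"

lemma closed_value_result: "closed_value (result t)"
  by (simp add: result_def closed_at_scott is_value_scott)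

lemma map_result_cterms: "\<forall>t\<in>set ts. is_cterm g ca t \<Longrightarrow> map result ts = map (scott g) ts"
  by (simp add: result_def)

text \<open>Code for a function of arity \<open>a\<close> refers to its \<open>i\<close>-th argument as \<open>arg_var a d i\<close> when it
  sits under \<open>d\<close> thunks.\<close>

definition arg_var :: "nat \<Rightarrow> nat \<Rightarrow> nat \<Rightarrow> lterm" where
  "arg_var a d i = LVar (d + (a - Suc i))"

lemma inst_thunk_env_var: "inst (thunk_env \<rho> d) 0 (LVar (d + k)) = \<rho> k"
  by simp

lemma inst_arg_var:
  "length vs = a \<Longrightarrow> i < a \<Longrightarrow> inst (thunk_env (env_push vs \<rho>) d) 0 (arg_var a d i) = vs ! i"
  unfolding arg_var_def inst_thunk_env_var by (simp add: env_push_nth rev_nth)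

fun check_args :: "nat \<Rightarrow> nat \<Rightarrow> nat list \<Rightarrow> (nat \<Rightarrow> lterm) \<Rightarrow> lterm" where
  "check_args a d [] K = K d"
| "check_args a d (i # is) K = lam_if (App bot_test (arg_var a d i)) (bot_term g) (check_args a (Suc d) is K)"

lemma red_check_args_scott:
  assumes "closed_value_env \<rho>" "length ws = a" "\<forall>w\<in>set ws. is_cterm g ca w" "\<forall>i\<in>set is. i < a"
  shows "red_le (length is * case_cost) (inst (thunk_env (env_push (map (scott g) ws) \<rho>) d) 0 (check_args a d is K))
           (inst (thunk_env (env_push (map (scott g) ws) \<rho>) (d + length is)) 0 (K (d + length is)))"
  using assms(4)
proof (induction "is" arbitrary: d)
  case (Cons i "is")
  let ?\<rho> = "env_push (map (scott g) ws) \<rho>"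
  have env: "closed_value_env (thunk_env ?\<rho> d)"
    using assms(1,3) closed_at_scott is_value_scott
    by (intro closed_value_env_thunk closed_value_env_push) auto
  obtain j where j: "j + 3 \<le> case_cost" "red j (App bot_test (scott g (ws ! i))) lam_false"
    using red_bot_test_scott assms(2,3) Cons.prems by force
  then have "red_le j (inst (thunk_env ?\<rho> d) 0 (App bot_test (arg_var a d i))) lam_false"
    using inst_arg_var assms(2) Cons.prems by (auto intro: red_le_red)
  from red_lam_if_false[OF env this]
  have "red_le (j + 3) (inst (thunk_env ?\<rho> d) 0 (check_args a d (i # is) K))
          (inst (thunk_env ?\<rho> (Suc d)) 0 (check_args a (Suc d) is K))"
    by (simp add: thunk_env_thunk)
  from red_le_trans[OF this Cons.IH] Cons.prems j(1) show ?case
    by (auto elim!: red_le_mono)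
qed (simp add: red_le_refl)

lemma red_check_args_bot:
  assumes "closed_value_env \<rho>" "length ws = a" "\<forall>i\<in>set is. i < a" "\<exists>i\<in>set is. \<not> is_cterm g ca (ws ! i)"
  shows "\<exists>b. red_le b (inst (thunk_env (env_push (map result ws) \<rho>) d) 0 (check_args a d is K)) (bot_term g)"
  using assms(3,4)
proof (induction "is" arbitrary: d)
  case (Cons i "is")
  let ?\<rho> = "env_push (map result ws) \<rho>"
  have env: "closed_value_env (thunk_env ?\<rho> d)"
    using assms(1) closed_value_result by (intro closed_value_env_thunk closed_value_env_push) auto
  have arg: "inst (thunk_env ?\<rho> d) 0 (App bot_test (arg_var a d i)) = App bot_test (result (ws ! i))"
    using inst_arg_var assms(2) Cons.prems by simp
  show ?case
  proof (cases "is_cterm g ca (ws ! i)")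
    case False
    then have "red_le (Suc (Suc g)) (inst (thunk_env ?\<rho> d) 0 (App bot_test (arg_var a d i))) lam_true"
      using arg red_bot_test_bot by (auto simp: result_def intro: red_le_red)
    from red_lam_if_true[OF env this, of "bot_term g" "check_args a (Suc d) is K"] show ?thesis
      by auto
  next
    case True
    obtain j where "red j (App bot_test (scott g (ws ! i))) lam_false"
      using red_bot_test_scott[OF True] by blast
    then have "red_le j (inst (thunk_env ?\<rho> d) 0 (App bot_test (arg_var a d i))) lam_false"
      using arg True by (auto simp: result_def intro: red_le_red)
    from red_lam_if_false[OF env this]
    have "red_le (j + 3) (inst (thunk_env ?\<rho> d) 0 (check_args a d (i # is) K))
            (inst (thunk_env ?\<rho> (Suc d)) 0 (check_args a (Suc d) is K))"
      by (simp add: thunk_env_thunk)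
    moreover obtain b where "red_le b (inst (thunk_env ?\<rho> (Suc d)) 0 (check_args a (Suc d) is K)) (bot_term g)"
      using Cons True by auto
    ultimately show ?thesis by (auto intro: red_le_trans)
  qed
qed simp

text \<open>The Scott encoding of constructor \<open>c\<close> applied to the arguments, seen from under \<open>d\<close>
  thunks.\<close>

definition rebuild :: "nat \<Rightarrow> nat \<Rightarrow> lterm" where
  "rebuild c d = abss (Suc g) (apps (LVar (g - c)) (map (\<lambda>i. LVar (Suc g + d + (ca c - Suc i))) [0..<ca c]))"

definition con_code :: "nat \<Rightarrow> lterm" where
  "con_code c = inst dummy_env 0 (abss (ca c) (check_args (ca c) 0 [0..<ca c] (rebuild c)))"

lemma inst_rebuild:
  assumes "length vs = ca c"
  shows "inst (thunk_env (env_push vs \<rho>) d) 0 (rebuild c d) = abss (Suc g) (apps (LVar (g - c)) vs)"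
proof -
  have "map (\<lambda>i. inst (thunk_env (env_push vs \<rho>) d) (Suc g) (LVar (Suc g + d + (ca c - Suc i)))) [0..<ca c]
        = map (\<lambda>i. vs ! i) [0..<length vs]"
    using assms by (auto simp: env_push_nth rev_nth add.assoc[symmetric])
  also have "\<dots> = vs" by (rule map_nth)
  finally show ?thesis
    unfolding rebuild_def inst_abss inst_apps map_map o_def add_0_right
    by (simp add: less_Suc_eq_le)
qed

lemma red_con_code_enter:
  assumes "length vs = ca c" "\<forall>V\<in>set vs. closed_value V"
  shows "red_le (ca c) (apps (con_code c) vs)
           (inst (thunk_env (env_push vs dummy_env) 0) 0 (check_args (ca c) 0 [0..<ca c] (rebuild c)))"
  using red_apps_abss[OF closed_value_env_dummy assms(2), of "check_args (ca c) 0 [0..<ca c] (rebuild c)"]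
    assms(1)
  by (simp add: con_code_def red_le_red)

lemma red_con_code_scott:
  assumes "c < g" "\<forall>u\<in>set us. is_cterm g ca u" "length us = ca c"
  shows "red_le (Suc arity_sum * case_cost) (apps (con_code c) (map (scott g) us)) (scott g (Con c us))"
proof -
  let ?vs = "map (scott g) us"
  have "red_le (ca c + ca c * case_cost) (apps (con_code c) ?vs)
          (inst (thunk_env (env_push ?vs dummy_env) (ca c)) 0 (rebuild c (ca c)))"
    using red_le_trans[OF red_con_code_enter red_check_args_scott[OF closed_value_env_dummy assms(3,2)]]
      assms(2,3) closed_at_scott is_value_scott by fastforce
  moreover have "inst (thunk_env (env_push ?vs dummy_env) (ca c)) 0 (rebuild c (ca c)) = scott g (Con c us)"
    using inst_rebuild[of ?vs c dummy_env "ca c"] assms(3) by simp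
  moreover have "ca c + ca c * case_cost \<le> Suc arity_sum * case_cost"
    using carity_le_arity_sum[OF assms(1)] by (simp add: case_cost_def add_mono)
  ultimately show ?thesis by (metis red_le_mono)
qed

lemma red_con_code_bot:
  assumes "length ts = ca c" "\<exists>t\<in>set ts. \<not> is_cterm g ca t"
  shows "\<exists>b. red_le b (apps (con_code c) (map result ts)) (bot_term g)"
proof -
  obtain i where "i < ca c" "\<not> is_cterm g ca (ts ! i)"
    using assms by (auto simp: in_set_conv_nth)
  then have "\<exists>i\<in>set [0..<ca c]. \<not> is_cterm g ca (ts ! i)" by auto
  then obtain b where "red_le b (inst (thunk_env (env_push (map result ts) dummy_env) 0) 0
                        (check_args (ca c) 0 [0..<ca c] (rebuild c))) (bot_term g)"
    using red_check_args_bot[OF closed_value_env_dummy assms(1), of "[0..<ca c]" 0] by auto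
  with red_con_code_enter[of "map result ts" c] assms(1) closed_value_result show ?thesis
    by (auto intro: red_le_trans)
qed

lemma closed_con_code: "closed_at 0 (con_code c)"
  unfolding con_code_def using closed_at_inst[OF closed_value_env_dummy] by blast

lemma inst_con_code [simp]: "inst \<rho> k (con_code c) = con_code c"
  by (rule inst_closed_at[OF closed_con_code]) simp

section \<open>Compiled pattern matching\<close>

text \<open>\<open>access a i \<pi> d\<close> extracts the subterm at path \<open>\<pi>\<close> (innermost step first) of argument \<open>i\<close>.\<close>

fun access :: "nat \<Rightarrow> nat \<Rightarrow> (nat \<times> nat) list \<Rightarrow> nat \<Rightarrow> lterm" where
  "access a i [] d = arg_var a d i"
| "access a i ((c, j) # \<pi>) d = App (con_proj c j) (access a i \<pi> d)"

definition accesses :: "nat \<Rightarrow> (nat \<Rightarrow> lterm) \<Rightarrow> nat \<Rightarrow> (nat \<times> nat) list \<Rightarrow> 'v rterm \<Rightarrow> bool" where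
  "accesses a \<rho> i \<pi> w =
     (\<forall>d. red_le (length \<pi> * case_cost) (inst (thunk_env \<rho> d) 0 (access a i \<pi> d)) (scott g w))"

lemma accesses_arg:
  "length vs = a \<Longrightarrow> i < a \<Longrightarrow> vs ! i = scott g w \<Longrightarrow> accesses a (env_push vs \<rho>) i [] w"
  unfolding accesses_def using inst_arg_var by (simp add: red_le_refl)

lemma accesses_child:
  assumes "accesses a \<rho> i \<pi> (Con c us)" "c < g" "\<forall>u\<in>set us. is_cterm g ca u" "length us = ca c" "j < ca c"
  shows "accesses a \<rho> i ((c, j) # \<pi>) (us ! j)"
  unfolding accesses_def
proof
  fix d
  have "red_le (length \<pi> * case_cost) (inst (thunk_env \<rho> d) 0 (access a i ((c, j) # \<pi>) d))
          (App (con_proj c j) (scott g (Con c us)))"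
    using assms(1) unfolding accesses_def by (simp add: red_le_appR del: scott.simps)
  from red_le_trans[OF this red_con_proj_scott[OF assms(2-5)]]
  show "red_le (length ((c, j) # \<pi>) * case_cost) (inst (thunk_env \<rho> d) 0 (access a i ((c, j) # \<pi>) d))
          (scott g (us ! j))"
    by (simp add: add.commute)
qed

lemma red_con_test_access:
  assumes "accesses a \<rho> i \<pi> (Con c' us)" "c' < g" "\<forall>u\<in>set us. is_cterm g ca u" "length us = ca c'"
  shows "\<exists>n. n + 3 \<le> Suc (length \<pi>) * case_cost \<and>
           red_le n (inst (thunk_env \<rho> d) 0 (App (con_test c) (access a i \<pi> d))) (if c' = c then lam_true else lam_false)"
proof -
  have "red_le (length \<pi> * case_cost) (inst (thunk_env \<rho> d) 0 (App (con_test c) (access a i \<pi> d)))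
          (App (con_test c) (scott g (Con c' us)))"
    using assms(1) unfolding accesses_def by (simp add: red_le_appR del: scott.simps)
  moreover obtain j where j: "j + 3 \<le> case_cost"
    "red j (App (con_test c) (scott g (Con c' us))) (if c' = c then lam_true else lam_false)"
    using red_con_test_scott[OF assms(2-4)] by blast
  ultimately have "red_le (length \<pi> * case_cost + j) (inst (thunk_env \<rho> d) 0 (App (con_test c) (access a i \<pi> d)))
      (if c' = c then lam_true else lam_false)"
    using red_le_trans red_le_red[OF j(2) order_refl] by blast
  with j(1) show ?thesis by (intro exI[of _ "length \<pi> * case_cost + j"]) auto
qed

text \<open>\<open>match_code a i \<pi> p d K F\<close> tests whether the subterm of argument \<open>i\<close> at path \<open>\<pi>\<close> matches
  \<open>p\<close> and continues with the success code \<open>K\<close> or the failure code \<open>F\<close>, both indexed by the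
  number of thunks entered so far.\<close>

fun match_code :: "nat \<Rightarrow> nat \<Rightarrow> (nat \<times> nat) list \<Rightarrow> 'v rterm \<Rightarrow> nat \<Rightarrow> (nat \<Rightarrow> lterm) \<Rightarrow> (nat \<Rightarrow> lterm) \<Rightarrow> lterm"
and match_codes :: "nat \<Rightarrow> nat \<Rightarrow> (nat \<times> nat) list \<Rightarrow> nat \<Rightarrow> nat \<Rightarrow> 'v rterm list \<Rightarrow> nat \<Rightarrow> (nat \<Rightarrow> lterm) \<Rightarrow> (nat \<Rightarrow> lterm) \<Rightarrow> lterm" where
  "match_code a i \<pi> (RVar x) d K F = K d"
| "match_code a i \<pi> (Con c qs) d K F =
     lam_if (App (con_test c) (access a i \<pi> d)) (match_codes a i \<pi> c 0 qs (Suc d) K F) (F (Suc d))"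
| "match_code a i \<pi> (Fun f qs) d K F = bot_term g"
| "match_codes a i \<pi> c j [] d K F = K d"
| "match_codes a i \<pi> c j (q # qs) d K F = match_code a i ((c, j) # \<pi>) q d (\<lambda>d'. match_codes a i \<pi> c (Suc j) qs d' K F) F"

lemma red_match_code_Con:
  assumes "closed_value_env \<rho>" "accesses a \<rho> i \<pi> (Con c' us)" "c' < g" "\<forall>u\<in>set us. is_cterm g ca u"
    "length us = ca c'"
  shows "red_le (Suc (length \<pi>) * case_cost) (inst (thunk_env \<rho> d) 0 (match_code a i \<pi> (Con c qs) d K F))
           (inst (thunk_env \<rho> (Suc d)) 0 (if c' = c then match_codes a i \<pi> c 0 qs (Suc d) K F else F (Suc d)))"
proof -
  obtain n where n: "n + 3 \<le> Suc (length \<pi>) * case_cost"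
    "red_le n (inst (thunk_env \<rho> d) 0 (App (con_test c) (access a i \<pi> d))) (if c' = c then lam_true else lam_false)"
    using red_con_test_access[OF assms(2-5)] by blast
  from red_lam_if[OF closed_value_env_thunk[OF assms(1)] n(2)]
  have "red_le (n + 3) (inst (thunk_env \<rho> d) 0 (match_code a i \<pi> (Con c qs) d K F))
          (inst (thunk_env \<rho> (Suc d)) 0 (if c' = c then match_codes a i \<pi> c 0 qs (Suc d) K F else F (Suc d)))"
    by (simp add: thunk_env_thunk)
  then show ?thesis using n(1) by (rule red_le_mono)
qed

lemma red_match_code:
  fixes p :: "'v rterm" and qs :: "'v rterm list"
  assumes env: "closed_value_env \<rho>"
  shows "is_pattern g ca p \<Longrightarrow> is_cterm g ca w \<Longrightarrow> accesses a \<rho> i \<pi> w \<Longrightarrow> length \<pi> + rsize p \<le> n \<Longrightarrow>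
     \<exists>d'. red_le (rsize p * (Suc n * case_cost)) (inst (thunk_env \<rho> d) 0 (match_code a i \<pi> p d K F))
             (inst (thunk_env \<rho> d') 0 (if matches p w then K d' else F d'))"
  and "\<forall>q\<in>set qs. is_pattern g ca q \<Longrightarrow> accesses a \<rho> i \<pi> (Con c us) \<Longrightarrow> c < g \<Longrightarrow>
     \<forall>u\<in>set us. is_cterm g ca u \<Longrightarrow> length us = ca c \<Longrightarrow> j + length qs = length us \<Longrightarrow>
     length \<pi> + Suc (sum_list (map rsize qs)) \<le> n \<Longrightarrow>
     \<exists>d'. red_le (sum_list (map rsize qs) * (Suc n * case_cost)) (inst (thunk_env \<rho> d) 0 (match_codes a i \<pi> c j qs d K F))
             (inst (thunk_env \<rho> d') 0 (if list_all2 matches qs (drop j us) then K d' else F d'))"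
proof (induction a i \<pi> p d K F and a i \<pi> c j qs d K F arbitrary: w and us
    rule: match_code_match_codes.induct)
  case (2 a i \<pi> c qs d K F)
  obtain c' us where w: "w = Con c' us" "c' < g" "length us = ca c'" "\<forall>u\<in>set us. is_cterm g ca u"
    using is_cterm_Con_cases[OF "2.prems"(2)] by blast
  note test = red_match_code_Con[OF env "2.prems"(3)[unfolded w(1)] w(2,4,3), of d c qs K F]
  have cost: "Suc (length \<pi>) * case_cost \<le> Suc n * case_cost" using "2.prems"(4) by simp
  show ?case
  proof (cases "c' = c")
    case True
    then obtain d' where "red_le (sum_list (map rsize qs) * (Suc n * case_cost))
        (inst (thunk_env \<rho> (Suc d)) 0 (match_codes a i \<pi> c 0 qs (Suc d) K F))
        (inst (thunk_env \<rho> d') 0 (if list_all2 matches qs us then K d' else F d'))"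
      using "2.IH"[of us] "2.prems" w by auto
    from red_le_trans[OF test[unfolded if_P[OF True]] this]
    have "red_le (rsize (Con c qs) * (Suc n * case_cost)) (inst (thunk_env \<rho> d) 0 (match_code a i \<pi> (Con c qs) d K F))
        (inst (thunk_env \<rho> d') 0 (if list_all2 matches qs us then K d' else F d'))"
      by (rule red_le_mono) (use cost in \<open>simp add: algebra_simps\<close>)
    then show ?thesis using w True by (auto simp: matches_list_eq)
  next
    case False
    have "Suc n * case_cost \<le> rsize (Con c qs) * (Suc n * case_cost)" by simp
    with cost have "Suc (length \<pi>) * case_cost \<le> rsize (Con c qs) * (Suc n * case_cost)"
      by (rule le_trans)
    from red_le_mono[OF test[unfolded if_not_P[OF False]] this] show ?thesis
      using w False by (intro exI[of _ "Suc d"]) auto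
  qed
next
  case (5 a i \<pi> c j q qs d K F)
  have dr: "drop j us = us ! j # drop (Suc j) us" using "5.prems"(6) by (simp add: Cons_nth_drop_Suc)
  have "accesses a \<rho> i ((c, j) # \<pi>) (us ! j)"
    using accesses_child[OF "5.prems"(2-5)] "5.prems"(5,6) by simp
  then obtain d1 where q: "red_le (rsize q * (Suc n * case_cost))
      (inst (thunk_env \<rho> d) 0 (match_code a i ((c, j) # \<pi>) q d (\<lambda>d'. match_codes a i \<pi> c (Suc j) qs d' K F) F))
      (inst (thunk_env \<rho> d1) 0 (if matches q (us ! j) then match_codes a i \<pi> c (Suc j) qs d1 K F else F d1))"
    using "5.IH"(2) "5.prems" by fastforce
  show ?case
  proof (cases "matches q (us ! j)")
    case True
    obtain d' where "red_le (sum_list (map rsize qs) * (Suc n * case_cost)) (inst (thunk_env \<rho> d1) 0 (match_codes a i \<pi> c (Suc j) qs d1 K F))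
        (inst (thunk_env \<rho> d') 0 (if list_all2 matches qs (drop (Suc j) us) then K d' else F d'))"
      using "5.IH"(1) "5.prems" by fastforce
    with red_le_trans[OF q[unfolded if_P[OF True]] this] show ?thesis
      using True dr by (auto simp: algebra_simps)
  next
    case False
    from red_le_mono[OF q[unfolded if_not_P[OF False]]] show ?thesis
      using False dr by (intro exI[of _ d1]) auto
  qed
qed (auto intro: red_le_refl)

fun match_args_code :: "nat \<Rightarrow> nat \<Rightarrow> 'v rterm list \<Rightarrow> nat \<Rightarrow> (nat \<Rightarrow> lterm) \<Rightarrow> (nat \<Rightarrow> lterm) \<Rightarrow> lterm" where
  "match_args_code a j [] d K F = K d"
| "match_args_code a j (p # ps) d K F = match_code a j [] p d (\<lambda>d'. match_args_code a (Suc j) ps d' K F) F"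

lemma red_match_args_code:
  assumes env: "closed_value_env \<rho>" and "length ws = length ps"
    and "\<forall>k<length ps. is_pattern g ca (ps ! k) \<and> is_cterm g ca (ws ! k) \<and> accesses a \<rho> (j + k) [] (ws ! k) \<and> rsize (ps ! k) \<le> n"
  shows "\<exists>d'. red_le (sum_list (map rsize ps) * (Suc n * case_cost)) (inst (thunk_env \<rho> d) 0 (match_args_code a j ps d K F))
           (inst (thunk_env \<rho> d') 0 (if list_all2 matches ps ws then K d' else F d'))"
  using assms(2,3)
proof (induction ps arbitrary: j ws d)
  case (Cons p ps)
  obtain w ws' where ws: "ws = w # ws'" using Cons.prems(1) by (cases ws) auto
  have hd: "is_pattern g ca p" "is_cterm g ca w" "accesses a \<rho> j [] w" "rsize p \<le> n"
    using Cons.prems(2)[rule_format, of 0] ws by auto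
  obtain d1 where p: "red_le (rsize p * (Suc n * case_cost)) (inst (thunk_env \<rho> d) 0 (match_args_code a j (p # ps) d K F))
      (inst (thunk_env \<rho> d1) 0 (if matches p w then match_args_code a (Suc j) ps d1 K F else F d1))"
    using red_match_code(1)[OF env hd(1-3), of n d] hd(4) by auto
  show ?case
  proof (cases "matches p w")
    case True
    have "\<forall>k<length ps. is_pattern g ca (ps ! k) \<and> is_cterm g ca (ws' ! k) \<and> accesses a \<rho> (Suc j + k) [] (ws' ! k) \<and> rsize (ps ! k) \<le> n"
      using Cons.prems(2) ws by (metis Suc_less_eq add_Suc_shift length_Cons nth_Cons_Suc)
    then obtain d' where "red_le (sum_list (map rsize ps) * (Suc n * case_cost)) (inst (thunk_env \<rho> d1) 0 (match_args_code a (Suc j) ps d1 K F))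
        (inst (thunk_env \<rho> d') 0 (if list_all2 matches ps ws' then K d' else F d'))"
      using Cons.IH Cons.prems(1) ws by force
    with red_le_trans[OF p[unfolded if_P[OF True]] this] show ?thesis
      using True ws by (auto simp: algebra_simps)
  next
    case False
    from red_le_mono[OF p[unfolded if_not_P[OF False]]] show ?thesis
      using False ws by (intro exI[of _ d1]) auto
  qed
qed (auto intro: red_le_refl)

lemma var_path_accesses:
  fixes p :: "'v rterm" and qs :: "'v rterm list"
  shows "is_pattern g ca p \<Longrightarrow> is_cterm g ca (rsubst \<sigma> p) \<Longrightarrow> accesses a \<rho> i \<pi> (rsubst \<sigma> p) \<Longrightarrow>
     x \<in> set (rvars p) \<Longrightarrow>
     \<exists>\<pi>'. var_path \<pi> p x = Some \<pi>' \<and> accesses a \<rho> i \<pi>' (\<sigma> x) \<and> length \<pi>' \<le> length \<pi> + rsize p"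
  and "\<forall>q\<in>set qs. is_pattern g ca q \<Longrightarrow> accesses a \<rho> i \<pi> (Con c us) \<Longrightarrow> c < g \<Longrightarrow> length us = ca c \<Longrightarrow>
     \<forall>u\<in>set us. is_cterm g ca u \<Longrightarrow> j + length qs = length us \<Longrightarrow> map (rsubst \<sigma>) qs = drop j us \<Longrightarrow>
     x \<in> (\<Union>q\<in>set qs. set (rvars q)) \<Longrightarrow>
     \<exists>\<pi>'. var_paths \<pi> c j qs x = Some \<pi>' \<and> accesses a \<rho> i \<pi>' (\<sigma> x) \<and>
       length \<pi>' \<le> length \<pi> + Suc (sum_list (map rsize qs))"
proof (induction \<pi> p x and \<pi> c j qs x arbitrary: and us rule: var_path_var_paths.induct)
  case (1 \<pi> y x)
  then show ?case by simp
next
  case (2 \<pi> c qs x)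
  have "\<exists>\<pi>'. var_paths \<pi> c 0 qs x = Some \<pi>' \<and> accesses a \<rho> i \<pi>' (\<sigma> x) \<and>
      length \<pi>' \<le> length \<pi> + Suc (sum_list (map rsize qs))"
    using "2.prems" by (intro "2.IH") auto
  then show ?case by simp
next
  case (3 \<pi> f qs x)
  then show ?case by simp
next
  case (4 \<pi> c j x)
  then show ?case by simp
next
  case (5 \<pi> c j q qs x)
  have dr: "drop j us = us ! j # drop (Suc j) us" using "5.prems"(6) by (simp add: Cons_nth_drop_Suc)
  then have q: "rsubst \<sigma> q = us ! j" "map (rsubst \<sigma>) qs = drop (Suc j) us" using "5.prems"(7) by auto
  show ?case
  proof (cases "x \<in> set (rvars q)")
    case True
    have "accesses a \<rho> i ((c, j) # \<pi>) (rsubst \<sigma> q)" "is_cterm g ca (rsubst \<sigma> q)"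
      using accesses_child[OF "5.prems"(2,3,5,4)] "5.prems"(4-6) q(1) by auto
    with "5.IH"(1) "5.prems"(1) True obtain \<pi>' where "var_path ((c, j) # \<pi>) q x = Some \<pi>'"
      "accesses a \<rho> i \<pi>' (\<sigma> x)" "length \<pi>' \<le> length ((c, j) # \<pi>) + rsize q"
      by auto
    then show ?thesis by auto
  next
    case False
    then have none: "var_path ((c, j) # \<pi>) q x = None" by (rule var_path_None(1))
    have "Suc j + length qs = length us" "x \<in> (\<Union>q\<in>set qs. set (rvars q))"
      using "5.prems"(6,8) False by auto
    with "5.IH"(2)[OF none _ "5.prems"(2-5) _ q(2)] "5.prems"(1) obtain \<pi>' where
      "var_paths \<pi> c (Suc j) qs x = Some \<pi>'" "accesses a \<rho> i \<pi>' (\<sigma> x)"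
      "length \<pi>' \<le> length \<pi> + Suc (sum_list (map rsize qs))"
      by auto
    then show ?thesis using none by auto
  qed
qed

lemma var_arg_path_accesses:
  "length ws = length ps \<Longrightarrow>
   \<forall>k<length ps. is_pattern g ca (ps ! k) \<and> rsubst \<sigma> (ps ! k) = ws ! k \<and> is_cterm g ca (ws ! k) \<and>
      accesses a \<rho> (j + k) [] (ws ! k) \<and> rsize (ps ! k) \<le> n \<Longrightarrow>
   x \<in> (\<Union>p\<in>set ps. set (rvars p)) \<Longrightarrow>
   \<exists>i \<pi>. var_arg_path j ps x = Some (i, \<pi>) \<and> accesses a \<rho> i \<pi> (\<sigma> x) \<and> length \<pi> \<le> n"
proof (induction ps arbitrary: j ws)
  case (Cons p ps)
  obtain w ws' where ws: "ws = w # ws'" using Cons.prems(1) by (cases ws) auto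
  have p: "is_pattern g ca p" "rsubst \<sigma> p = w" "is_cterm g ca w" "accesses a \<rho> j [] w" "rsize p \<le> n"
    using Cons.prems(2)[rule_format, of 0] ws by auto
  show ?case
  proof (cases "x \<in> set (rvars p)")
    case True
    then show ?thesis using var_path_accesses(1)[of p \<sigma> a \<rho> j "[]" x] p by auto
  next
    case False
    then have "var_path [] p x = None" by (rule var_path_None(1))
    moreover have "\<forall>k<length ps. is_pattern g ca (ps ! k) \<and> rsubst \<sigma> (ps ! k) = ws' ! k \<and> is_cterm g ca (ws' ! k) \<and>
      accesses a \<rho> (Suc j + k) [] (ws' ! k) \<and> rsize (ps ! k) \<le> n"
      using Cons.prems(2) ws by (metis Suc_less_eq add_Suc_shift length_Cons nth_Cons_Suc)
    ultimately show ?thesis using Cons.IH[of ws' "Suc j"] Cons.prems(1,3) ws False by auto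
  qed
qed simp

end

section \<open>Compiling the rewrite system\<close>

text \<open>Rewrite steps instantiate all variables by constructor terms, so \<open>cterm_exists\<close> is
  needed for a rule to fire at all; the degenerate case is handled separately in the end.\<close>

locale orthogonal_constructor_trs = constructor_signature +
  fixes h :: nat and fa :: "nat \<Rightarrow> nat" and R :: "'v rule list"
  assumes trs: "constructor_trs g h ca fa R" and orth: "orthogonal R"
    and cterm_exists: "\<exists>w::'v rterm. is_cterm g ca w"
begin

text \<open>Recursion is implemented by self-application: \<open>fun_code f\<close> expects the \<open>dispatcher\<close> \<open>D\<close>
  and then the arguments, and \<open>D (selector f') D\<close> reduces to \<open>fun_term f' = fun_code f' D\<close>.
  In the body of \<open>f\<close>, under the \<open>fa f\<close> argument binders and \<open>d\<close> thunks, \<open>D\<close> has index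
  \<open>d + fa f\<close>.\<close>

definition selector :: "nat \<Rightarrow> lterm" where
  "selector f = abss h (LVar (h - Suc f))"

fun rhs_code :: "nat \<Rightarrow> 'v rterm list \<Rightarrow> nat \<Rightarrow> 'v rterm \<Rightarrow> lterm" where
  "rhs_code a ps d (RVar x) = (case var_arg_path 0 ps x of Some (i, \<pi>) \<Rightarrow> access a i \<pi> d | None \<Rightarrow> lam_id)"
| "rhs_code a ps d (Con c ts) = apps (con_code c) (map (rhs_code a ps d) ts)"
| "rhs_code a ps d (Fun f ts) =
     apps (App (App (LVar (d + a)) (selector f)) (LVar (d + a))) (map (rhs_code a ps d) ts)"

fun rules_code :: "nat \<Rightarrow> nat \<Rightarrow> 'v rule list \<Rightarrow> lterm" where
  "rules_code a d [] = bot_term g"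
| "rules_code a d ((f, ps, r) # rs) =
     match_args_code a 0 ps d (\<lambda>d'. rhs_code a ps d' r) (\<lambda>d'. rules_code a d' rs)"

definition rules_of :: "nat \<Rightarrow> 'v rule list" where
  "rules_of f = filter (\<lambda>\<rho>. fst \<rho> = f) R"

definition fun_body :: "nat \<Rightarrow> lterm" where
  "fun_body f = check_args (fa f) 0 [0..<fa f] (\<lambda>d. rules_code (fa f) d (rules_of f))"

definition fun_code :: "nat \<Rightarrow> lterm" where
  "fun_code f = inst dummy_env 0 (Abs (abss (fa f) (fun_body f)))"

definition dispatcher :: lterm where
  "dispatcher = Abs (apps (LVar 0) (map fun_code [0..<h]))"

definition fun_term :: "nat \<Rightarrow> lterm" where
  "fun_term f = App (fun_code f) dispatcher"

definition fun_env :: "lterm list \<Rightarrow> nat \<Rightarrow> lterm" where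
  "fun_env vs = env_push vs (env_cons dispatcher dummy_env)"

lemma closed_fun_code: "closed_value (fun_code f)"
  unfolding fun_code_def by (simp add: closed_at_inst[OF closed_value_env_dummy])

lemma inst_fun_code [simp]: "inst \<rho> k (fun_code f) = fun_code f"
  using inst_closed_at closed_fun_code by blast

lemma closed_dispatcher: "closed_value dispatcher"
  unfolding dispatcher_def using closed_fun_code by (auto intro: closed_at_mono[of 0])

lemma inst_dispatcher [simp]: "inst \<rho> k dispatcher = dispatcher"
  using inst_closed_at closed_dispatcher by blast

lemma closed_selector: "f < h \<Longrightarrow> closed_value (selector f)"
  unfolding selector_def by (cases h) auto

lemma closed_value_env_fun: "\<forall>v\<in>set vs. closed_value v \<Longrightarrow> closed_value_env (fun_env vs)"
  unfolding fun_env_def using closed_dispatcher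
  by (intro closed_value_env_push closed_value_env_cons closed_value_env_dummy) auto

lemma fun_env_dispatcher: "fun_env vs (length vs) = dispatcher"
  by (simp add: fun_env_def env_push_nth env_cons_def)

lemma red_dispatcher_selector:
  assumes "f < h"
  shows "red_le (Suc h) (App (App dispatcher (selector f)) dispatcher) (fun_term f)"
proof -
  let ?Fs = "map fun_code [0..<h]"
  have "beta_v (App (inst dummy_env 0 dispatcher) (selector f)) (inst (env_cons (selector f) dummy_env) 0 (apps (LVar 0) ?Fs))"
    unfolding dispatcher_def by (rule beta_v_inst[OF closed_value_env_dummy closed_selector[OF assms]])
  then have "red 1 (App dispatcher (selector f)) (apps (selector f) ?Fs)"
    by (simp add: red_1 env_cons_def comp_def)
  moreover have "selector f = inst dummy_env 0 (abss (length ?Fs) (LVar (h - Suc f)))"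
    using inst_closed_at[of 0 "selector f" 0 dummy_env] closed_selector[OF assms] by (simp add: selector_def)
  then have "red h (apps (selector f) ?Fs) (fun_code f)"
    using red_apps_abss[OF closed_value_env_dummy, of ?Fs "LVar (h - Suc f)"] closed_fun_code assms
    by (simp add: env_push_nth rev_nth)
  ultimately have "red (Suc h) (App dispatcher (selector f)) (fun_code f)"
    using relpowp_trans by fastforce
  then show ?thesis unfolding fun_term_def by (intro red_le_appL red_le_red) auto
qed

lemma red_fun_term_enter:
  assumes "\<forall>v\<in>set vs. closed_value v" "length vs = fa f"
  shows "red (Suc (fa f)) (apps (fun_term f) vs) (inst (fun_env vs) 0 (fun_body f))"
proof -
  have env: "closed_value_env (env_cons dispatcher dummy_env)"
    using closed_dispatcher by (intro closed_value_env_cons closed_value_env_dummy)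
  have "beta_v (App (inst dummy_env 0 (Abs (abss (fa f) (fun_body f)))) dispatcher)
          (inst (env_cons dispatcher dummy_env) 0 (abss (fa f) (fun_body f)))"
    by (rule beta_v_inst[OF closed_value_env_dummy closed_dispatcher])
  then have "red 1 (apps (fun_term f) vs) (apps (inst (env_cons dispatcher dummy_env) 0 (abss (fa f) (fun_body f))) vs)"
    unfolding fun_term_def fun_code_def by (intro red_apps_head red_1)
  moreover have "red (fa f) (apps (inst (env_cons dispatcher dummy_env) 0 (abss (fa f) (fun_body f))) vs)
                   (inst (fun_env vs) 0 (fun_body f))"
    using red_apps_abss[OF env assms(1), of "fun_body f"] assms(2) by (simp add: fun_env_def)
  ultimately show ?thesis using relpowp_trans by fastforce
qed

text \<open>\<open>repr M t p\<close>: the \<lambda>-term \<open>M\<close> simulates the term \<open>t\<close>, and at most \<open>p\<close> constructor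
  applications of \<open>t\<close> still have to be evaluated in \<open>M\<close>, each at cost \<open>con_cost\<close>.\<close>

inductive repr :: "lterm \<Rightarrow> 'v rterm \<Rightarrow> nat \<Rightarrow> bool" where
  repr_scott: "is_cterm g ca t \<Longrightarrow> repr (scott g t) t 0"
| repr_con: "c < g \<Longrightarrow> length ts = ca c \<Longrightarrow> length Ms = length ts \<Longrightarrow> length ps = length ts \<Longrightarrow>
    \<forall>i<length ts. repr (Ms ! i) (ts ! i) (ps ! i) \<Longrightarrow> repr (apps (con_code c) Ms) (Con c ts) (Suc (sum_list ps))"
| repr_fun: "f < h \<Longrightarrow> length ts = fa f \<Longrightarrow> length Ms = length ts \<Longrightarrow> length ps = length ts \<Longrightarrow>
    \<forall>i<length ts. repr (Ms ! i) (ts ! i) (ps ! i) \<Longrightarrow> repr (apps (fun_term f) Ms) (Fun f ts) (sum_list ps)"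

lemma accesses_fun_env: "k < length ws \<Longrightarrow> accesses (length ws) (fun_env (map (scott g) ws)) k [] (ws ! k)"
  unfolding fun_env_def by (rule accesses_arg) auto

lemma red_rhs_code_RVar:
  assumes "map (rsubst \<sigma>) ps = ws" "\<forall>p\<in>set ps. is_pattern g ca p \<and> rsize p \<le> n" "\<forall>w\<in>set ws. is_cterm g ca w"
    and "x \<in> (\<Union>p\<in>set ps. set (rvars p))"
  shows "red_le (n * case_cost) (inst (thunk_env (fun_env (map (scott g) ws)) d) 0 (rhs_code (length ps) ps d (RVar x)))
           (scott g (\<sigma> x))"
proof -
  have len: "length ws = length ps" using assms(1) by auto
  have "\<forall>k<length ps. is_pattern g ca (ps ! k) \<and> rsubst \<sigma> (ps ! k) = ws ! k \<and> is_cterm g ca (ws ! k) \<and>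
      accesses (length ps) (fun_env (map (scott g) ws)) (0 + k) [] (ws ! k) \<and> rsize (ps ! k) \<le> n"
    using assms(1-3) len accesses_fun_env[of _ ws] nth_mem by fastforce
  then obtain i \<pi> where "var_arg_path 0 ps x = Some (i, \<pi>)"
    "accesses (length ps) (fun_env (map (scott g) ws)) i \<pi> (\<sigma> x)" "length \<pi> \<le> n"
    using var_arg_path_accesses[OF len _ assms(4)] by blast
  then show ?thesis
    unfolding accesses_def by (auto intro: red_le_mono[OF _ mult_le_mono1])
qed

lemma red_rhs_code:
  assumes "map (rsubst \<sigma>) ps = ws" "\<forall>p\<in>set ps. is_pattern g ca p \<and> rsize p \<le> n" "\<forall>w\<in>set ws. is_cterm g ca w"
    and "wf_term g h ca fa r" "set (rvars r) \<subseteq> (\<Union>p\<in>set ps. set (rvars p))"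
  shows "\<exists>M p. red_le (rsize r * (n * case_cost + Suc h))
                 (inst (thunk_env (fun_env (map (scott g) ws)) d) 0 (rhs_code (length ps) ps d r)) M \<and>
               repr M (rsubst \<sigma> r) p \<and> p \<le> rsize r"
  using assms(4,5)
proof (induction r)
  case (RVar x)
  then obtain p where "p \<in> set ps" "x \<in> set (rvars p)" by auto
  then have "is_cterm g ca (\<sigma> x)" using assms(1,3) is_cterm_rsubst_var by fastforce
  moreover have "red_le (rsize (RVar x) * (n * case_cost + Suc h))
      (inst (thunk_env (fun_env (map (scott g) ws)) d) 0 (rhs_code (length ps) ps d (RVar x))) (scott g (\<sigma> x))"
    using red_le_mono[OF red_rhs_code_RVar[OF assms(1-3)]] RVar.prems by simp
  ultimately show ?case by (auto intro: repr.repr_scott)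
next
  case (Con c ts)
  let ?V = "n * case_cost + Suc h"
    and ?code = "\<lambda>t. inst (thunk_env (fun_env (map (scott g) ws)) d) 0 (rhs_code (length ps) ps d t)"
  have c: "c < g" "length ts = ca c" using Con.prems(1) by auto
  have "\<forall>t\<in>set ts. \<exists>M q. red_le (rsize t * ?V) (?code t) M \<and> repr M (rsubst \<sigma> t) q \<and> q \<le> rsize t"
    using Con.IH Con.prems by fastforce
  then obtain Ms qs where args: "length Ms = length ts" "length qs = length ts"
    "\<forall>i<length ts. repr (Ms ! i) (rsubst \<sigma> (ts ! i)) (qs ! i)"
    "red_le (sum_list (map rsize ts) * ?V) (apps (con_code c) (map ?code ts)) (apps (con_code c) Ms)"
    "sum_list qs \<le> sum_list (map rsize ts)"
    by (rule red_le_apps_map)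
  show ?case
  proof (intro exI conjI)
    show "red_le (rsize (Con c ts) * ?V) (?code (Con c ts)) (apps (con_code c) Ms)"
      using red_le_mono[OF args(4)] by (simp add: comp_def)
    show "repr (apps (con_code c) Ms) (rsubst \<sigma> (Con c ts)) (Suc (sum_list qs))"
      using args(1-3) c by (auto intro!: repr.repr_con)
    show "Suc (sum_list qs) \<le> rsize (Con c ts)" using args(5) by simp
  qed
next
  case (Fun f ts)
  let ?V = "n * case_cost + Suc h"
    and ?code = "\<lambda>t. inst (thunk_env (fun_env (map (scott g) ws)) d) 0 (rhs_code (length ps) ps d t)"
    and ?D = "App (App dispatcher (selector f)) dispatcher"
  have f: "f < h" "length ts = fa f" using Fun.prems(1) by auto
  have "\<forall>t\<in>set ts. \<exists>M q. red_le (rsize t * ?V) (?code t) M \<and> repr M (rsubst \<sigma> t) q \<and> q \<le> rsize t"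
    using Fun.IH Fun.prems by fastforce
  then obtain Ms qs where args: "length Ms = length ts" "length qs = length ts"
    "\<forall>i<length ts. repr (Ms ! i) (rsubst \<sigma> (ts ! i)) (qs ! i)"
    "red_le (sum_list (map rsize ts) * ?V) (apps (fun_term f) (map ?code ts)) (apps (fun_term f) Ms)"
    "sum_list qs \<le> sum_list (map rsize ts)"
    by (rule red_le_apps_map)
  have "inst (thunk_env (fun_env (map (scott g) ws)) d) 0 (LVar (d + length ps)) = dispatcher"
    unfolding inst_thunk_env_var using fun_env_dispatcher[of "map (scott g) ws"] assms(1) by auto
  moreover have "inst \<rho> k (selector f) = selector f" for \<rho> k
    using closed_selector[OF f(1)] inst_closed_at[of 0 "selector f"] by simp
  ultimately have code: "?code (Fun f ts) = apps ?D (map ?code ts)"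
    by (simp add: comp_def del: inst.simps(1))
  show ?case
  proof (intro exI conjI)
    have "red_le (Suc h + sum_list (map rsize ts) * ?V) (?code (Fun f ts)) (apps (fun_term f) Ms)"
      unfolding code by (rule red_le_trans[OF red_le_apps_head[OF red_dispatcher_selector[OF f(1)]] args(4)])
    then show "red_le (rsize (Fun f ts) * ?V) (?code (Fun f ts)) (apps (fun_term f) Ms)"
      by (rule red_le_mono) simp
    show "repr (apps (fun_term f) Ms) (rsubst \<sigma> (Fun f ts)) (sum_list qs)"
      using args(1-3) f by (auto intro!: repr.repr_fun)
    show "sum_list qs \<le> rsize (Fun f ts)" using args(5) by simp
  qed
qed

lemma wf_rule_R: "\<rho> \<in> set R \<Longrightarrow> wf_rule g h ca fa \<rho>"
  using trs by (simp add: constructor_trs_def)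

lemma orthogonal_unique_rule:
  assumes "(f, ps, r) \<in> set R" "(f, ps', r') \<in> set R" "map (rsubst \<sigma>) ps = map (rsubst \<sigma>') ps'"
  shows "(ps', r') = (ps, r)"
proof (rule ccontr)
  assume ne: "(ps', r') \<noteq> (ps, r)"
  obtain i j where "i < length R" "R ! i = (f, ps, r)" "j < length R" "R ! j = (f, ps', r')"
    using assms(1,2) by (auto simp: in_set_conv_nth)
  moreover from this ne have "i \<noteq> j" by auto
  ultimately show False using orth assms(3) unfolding orthogonal_def by fastforce
qed

lemma rule_matches_imp_rsubst:
  assumes "(f, ps, r) \<in> set R" "list_all2 matches ps ws"
  shows "\<exists>\<sigma>. map (rsubst \<sigma>) ps = ws"
proof -
  have "distinct (concat (map rvars ps))" using orth assms(1) unfolding orthogonal_def by fastforce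
  with assms(2) show ?thesis by (rule list_matches_imp_rsubst)
qed

lemma matching_rule_unique:
  assumes "(f, ps, r) \<in> set R" "(f, ps', r') \<in> set R" "list_all2 matches ps ws" "list_all2 matches ps' ws"
  shows "(ps', r') = (ps, r)"
  using rule_matches_imp_rsubst[OF assms(1,3)] rule_matches_imp_rsubst[OF assms(2,4)]
    orthogonal_unique_rule[OF assms(1,2)] by metis

text \<open>A single constant bounds the number of rules, the sizes of all rules and the sum of all
  arities; the costs of matching and of building a right-hand side are polynomials in it.\<close>

definition size_bound :: nat where
  "size_bound = length R + (\<Sum>(f, ps, r)\<leftarrow>R. sum_list (map rsize ps) + rsize r) + (\<Sum>f<h. fa f)"

lemma rule_size_le_size_bound:
  assumes "(f, ps, r) \<in> set R"
  shows "sum_list (map rsize ps) \<le> size_bound" "rsize r \<le> size_bound" "\<forall>p\<in>set ps. rsize p \<le> size_bound"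
proof -
  have "sum_list (map rsize ps) + rsize r \<le> (\<Sum>(f, ps, r)\<leftarrow>R. sum_list (map rsize ps) + rsize r)"
    using member_le_sum_list[of "(\<lambda>(f, ps, r). sum_list (map rsize ps) + rsize r) (f, ps, r)"] assms by force
  then have le: "sum_list (map rsize ps) + rsize r \<le> size_bound" by (simp add: size_bound_def)
  then show "sum_list (map rsize ps) \<le> size_bound" "rsize r \<le> size_bound" by auto
  show "\<forall>p\<in>set ps. rsize p \<le> size_bound"
    using le member_le_sum_list[of _ "map rsize ps"] by fastforce
qed

lemma farity_le_size_bound: "f < h \<Longrightarrow> fa f \<le> size_bound"
  using member_le_sum[of f "{..<h}" fa] by (simp add: size_bound_def)

lemma length_rules_of_le_size_bound: "length (rules_of f) \<le> size_bound"
  using length_filter_le[of "\<lambda>\<rho>. fst \<rho> = f" R] unfolding rules_of_def size_bound_def by linarith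

abbreviation match_cost :: nat where
  "match_cost \<equiv> size_bound * (Suc size_bound * case_cost)"

lemma red_rules_code_Cons:
  assumes "(f, ps, r) \<in> set R" "length ws = fa f" "\<forall>w\<in>set ws. is_cterm g ca w"
  shows "\<exists>d'. red_le match_cost
           (inst (thunk_env (fun_env (map (scott g) ws)) d) 0 (rules_code (fa f) d ((f, ps, r) # rs)))
           (inst (thunk_env (fun_env (map (scott g) ws)) d') 0
              (if list_all2 matches ps ws then rhs_code (fa f) ps d' r else rules_code (fa f) d' rs))"
proof -
  let ?\<rho> = "fun_env (map (scott g) ws)"
  have wf: "length ps = fa f" "\<forall>p\<in>set ps. is_pattern g ca p"
    using wf_rule_R[OF assms(1)] by (auto simp: wf_rule_def)
  have "\<forall>k<length ps. is_pattern g ca (ps ! k) \<and> is_cterm g ca (ws ! k) \<and>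
      accesses (fa f) ?\<rho> (0 + k) [] (ws ! k) \<and> rsize (ps ! k) \<le> size_bound"
    using wf assms rule_size_le_size_bound(3)[OF assms(1)] accesses_fun_env[of _ ws] by auto
  moreover have "closed_value_env ?\<rho>"
    using assms(3) closed_at_scott is_value_scott by (intro closed_value_env_fun) auto
  moreover have "length ws = length ps" using assms(2) wf(1) by simp
  ultimately obtain d' where "red_le (sum_list (map rsize ps) * (Suc size_bound * case_cost))
      (inst (thunk_env ?\<rho> d) 0 (rules_code (fa f) d ((f, ps, r) # rs)))
      (inst (thunk_env ?\<rho> d') 0 (if list_all2 matches ps ws then rhs_code (fa f) ps d' r else rules_code (fa f) d' rs))"
    using red_match_args_code[of ?\<rho> ws ps "fa f" 0 size_bound d "\<lambda>d'. rhs_code (fa f) ps d' r"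
        "\<lambda>d'. rules_code (fa f) d' rs"] by auto
  moreover have "sum_list (map rsize ps) * (Suc size_bound * case_cost) \<le> match_cost"
    using rule_size_le_size_bound(1)[OF assms(1)] by simp
  ultimately show ?thesis by (blast intro: red_le_mono)
qed

lemma red_rules_code_match:
  assumes "\<forall>\<rho>\<in>set rs. \<rho> \<in> set R \<and> fst \<rho> = f" "length ws = fa f" "\<forall>w\<in>set ws. is_cterm g ca w"
    and "(f, ps, r) \<in> set rs" "list_all2 matches ps ws"
  shows "\<exists>d'. red_le (length rs * match_cost)
           (inst (thunk_env (fun_env (map (scott g) ws)) d) 0 (rules_code (fa f) d rs))
           (inst (thunk_env (fun_env (map (scott g) ws)) d') 0 (rhs_code (fa f) ps d' r))"
  using assms(1,4)
proof (induction rs arbitrary: d)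
  case (Cons \<rho> rs)
  obtain ps' r' where \<rho>: "\<rho> = (f, ps', r')" "(f, ps', r') \<in> set R" using Cons.prems(1) by (cases \<rho>) auto
  obtain d1 where step: "red_le match_cost (inst (thunk_env (fun_env (map (scott g) ws)) d) 0 (rules_code (fa f) d (\<rho> # rs)))
      (inst (thunk_env (fun_env (map (scott g) ws)) d1) 0
         (if list_all2 matches ps' ws then rhs_code (fa f) ps' d1 r' else rules_code (fa f) d1 rs))"
    using red_rules_code_Cons[OF \<rho>(2) assms(2,3)] \<rho>(1) by blast
  show ?case
  proof (cases "list_all2 matches ps' ws")
    case True
    have "(f, ps, r) \<in> set R" using Cons.prems by auto
    then have "(ps', r') = (ps, r)" using matching_rule_unique[OF _ \<rho>(2) assms(5) True] by blast
    with step True have "red_le match_cost (inst (thunk_env (fun_env (map (scott g) ws)) d) 0 (rules_code (fa f) d (\<rho> # rs)))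
        (inst (thunk_env (fun_env (map (scott g) ws)) d1) 0 (rhs_code (fa f) ps d1 r))"
      by simp
    then show ?thesis by (intro exI[of _ d1]) (auto elim: red_le_mono)
  next
    case False
    then have "(f, ps, r) \<in> set rs" using Cons.prems(2) \<rho>(1) assms(5) by auto
    with Cons.IH Cons.prems(1) obtain d' where "red_le (length rs * match_cost)
        (inst (thunk_env (fun_env (map (scott g) ws)) d1) 0 (rules_code (fa f) d1 rs))
        (inst (thunk_env (fun_env (map (scott g) ws)) d') 0 (rhs_code (fa f) ps d' r))"
      by auto
    with red_le_trans[OF step[unfolded if_not_P[OF False]] this] show ?thesis
      by (auto simp: add.commute)
  qed
qed simp

lemma red_rules_code_bot:
  assumes "\<forall>\<rho>\<in>set rs. \<rho> \<in> set R \<and> fst \<rho> = f" "length ws = fa f" "\<forall>w\<in>set ws. is_cterm g ca w"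
    and "\<forall>(f, ps, r)\<in>set rs. \<not> list_all2 matches ps ws"
  shows "\<exists>b. red_le b (inst (thunk_env (fun_env (map (scott g) ws)) d) 0 (rules_code (fa f) d rs)) (bot_term g)"
  using assms(1,4)
proof (induction rs arbitrary: d)
  case (Cons \<rho> rs)
  obtain ps r where \<rho>: "\<rho> = (f, ps, r)" "(f, ps, r) \<in> set R" using Cons.prems(1) by (cases \<rho>) auto
  obtain d1 where "red_le match_cost (inst (thunk_env (fun_env (map (scott g) ws)) d) 0 (rules_code (fa f) d (\<rho> # rs)))
      (inst (thunk_env (fun_env (map (scott g) ws)) d1) 0 (rules_code (fa f) d1 rs))"
    using red_rules_code_Cons[OF \<rho>(2) assms(2,3)] \<rho>(1) Cons.prems(2) by fastforce
  moreover have "\<forall>\<rho>\<in>set rs. \<rho> \<in> set R \<and> fst \<rho> = f" "\<forall>(f, ps, r)\<in>set rs. \<not> list_all2 matches ps ws"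
    using Cons.prems by auto
  then obtain b where "red_le b (inst (thunk_env (fun_env (map (scott g) ws)) d1) 0 (rules_code (fa f) d1 rs)) (bot_term g)"
    using Cons.IH by blast
  ultimately show ?case by (blast intro: red_le_trans)
qed (auto intro: red_le_refl)

definition rule_cost :: nat where
  "rule_cost = Suc size_bound + size_bound * case_cost + size_bound * match_cost
     + size_bound * (size_bound * case_cost + Suc h)"

lemma red_fun_body_rules:
  assumes "length ws = fa f" "\<forall>w\<in>set ws. is_cterm g ca w"
  shows "red_le (fa f * case_cost) (inst (fun_env (map (scott g) ws)) 0 (fun_body f))
           (inst (thunk_env (fun_env (map (scott g) ws)) (fa f)) 0 (rules_code (fa f) (fa f) (rules_of f)))"
proof -
  have "closed_value_env (env_cons dispatcher dummy_env)"
    using closed_dispatcher by (intro closed_value_env_cons closed_value_env_dummy)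
  from red_check_args_scott[OF this assms, of "[0..<fa f]" 0 "\<lambda>d. rules_code (fa f) d (rules_of f)"]
  show ?thesis by (simp add: fun_body_def fun_env_def)
qed

lemma red_fun_term_rule:
  assumes r: "(f, ps, r) \<in> set R" and ws: "\<forall>w\<in>set ws. is_cterm g ca w" and m: "map (rsubst \<sigma>) ps = ws"
  shows "\<exists>j M p. 0 < j \<and> j \<le> rule_cost \<and> red j (apps (fun_term f) (map (scott g) ws)) M \<and>
           repr M (rsubst \<sigma> r) p \<and> p \<le> size_bound"
proof -
  let ?vs = "map (scott g) ws"
  have wf: "f < h" "length ps = fa f" "\<forall>p\<in>set ps. is_pattern g ca p" "wf_term g h ca fa r"
     "set (rvars r) \<subseteq> (\<Union>p\<in>set ps. set (rvars p))"
    using wf_rule_R[OF r] by (auto simp: wf_rule_def)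
  have lw: "length ws = fa f" using m wf(2) by auto
  have enter: "red (Suc (fa f)) (apps (fun_term f) ?vs) (inst (fun_env ?vs) 0 (fun_body f))"
    using ws lw closed_at_scott is_value_scott by (intro red_fun_term_enter) auto
  have "\<forall>p\<in>set ps. matches p (rsubst \<sigma> p)" using wf(3) matches_rsubst by blast
  then have "(f, ps, r) \<in> set (rules_of f)" "list_all2 matches ps ws"
    using r m by (auto simp: rules_of_def list_all2_conv_all_nth)
  then obtain d where "red_le (length (rules_of f) * match_cost)
      (inst (thunk_env (fun_env ?vs) (fa f)) 0 (rules_code (fa f) (fa f) (rules_of f)))
      (inst (thunk_env (fun_env ?vs) d) 0 (rhs_code (fa f) ps d r))"
    using red_rules_code_match[of "rules_of f" f ws ps r "fa f"] lw ws by (auto simp: rules_of_def)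
  moreover obtain M p where "red_le (rsize r * (size_bound * case_cost + Suc h))
      (inst (thunk_env (fun_env ?vs) d) 0 (rhs_code (fa f) ps d r)) M" "repr M (rsubst \<sigma> r) p" "p \<le> rsize r"
    using red_rhs_code[OF m _ ws wf(4,5), of size_bound d] wf(2,3) rule_size_le_size_bound(3)[OF r] by auto
  ultimately have "red_le (fa f * case_cost + length (rules_of f) * match_cost + rsize r * (size_bound * case_cost + Suc h))
      (inst (fun_env ?vs) 0 (fun_body f)) M"
    using red_le_trans red_fun_body_rules[OF lw ws] by blast
  then obtain j where j: "j \<le> fa f * case_cost + length (rules_of f) * match_cost + rsize r * (size_bound * case_cost + Suc h)"
    "red j (inst (fun_env ?vs) 0 (fun_body f)) M"
    unfolding red_le_def by blast
  have "fa f * case_cost \<le> size_bound * case_cost" "length (rules_of f) * match_cost \<le> size_bound * match_cost"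
    "rsize r * (size_bound * case_cost + Suc h) \<le> size_bound * (size_bound * case_cost + Suc h)"
    using farity_le_size_bound[OF wf(1)] length_rules_of_le_size_bound rule_size_le_size_bound(2)[OF r]
    by (metis mult_le_mono1)+
  then have "Suc (fa f) + j \<le> rule_cost"
    using j(1) farity_le_size_bound[OF wf(1)] unfolding rule_cost_def by linarith
  moreover have "p \<le> size_bound" using \<open>p \<le> rsize r\<close> rule_size_le_size_bound(2)[OF r] by simp
  ultimately show ?thesis
    using relpowp_trans[OF enter j(2)] \<open>repr M (rsubst \<sigma> r) p\<close> by (intro exI[of _ "Suc (fa f) + j"]) auto
qed

section \<open>Simulating rewrite sequences\<close>

lemma cterm_no_step: "cbv_step g ca R t t' \<Longrightarrow> \<not> is_cterm g ca t"
  by (induction rule: cbv_step.induct) auto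

lemma rnormal_arg:
  "rnormal g ca R (Con c ts) \<Longrightarrow> i < length ts \<Longrightarrow> rnormal g ca R (ts ! i)"
  "rnormal g ca R (Fun f ts) \<Longrightarrow> i < length ts \<Longrightarrow> rnormal g ca R (ts ! i)"
  unfolding rnormal_def using cbv_step.ctxt_con cbv_step.ctxt_fun by blast+

text \<open>A rule whose left-hand side matches constructor terms can fire: variables not occurring
  in the left-hand side are sent to an arbitrary constructor term.\<close>

lemma rnormal_no_matching_rule:
  assumes "rnormal g ca R (Fun f ts)" "\<forall>t\<in>set ts. is_cterm g ca t" "(f, ps, r) \<in> set R"
  shows "\<not> list_all2 matches ps ts"
proof
  assume "list_all2 matches ps ts"
  then obtain \<sigma> where \<sigma>: "map (rsubst \<sigma>) ps = ts" using rule_matches_imp_rsubst[OF assms(3)] by blast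
  obtain w0 :: "'v rterm" where w0: "is_cterm g ca w0" using cterm_exists by blast
  define \<sigma>' where "\<sigma>' x = (if x \<in> (\<Union>p\<in>set ps. set (rvars p)) then \<sigma> x else w0)" for x
  have "rsubst \<sigma>' p = rsubst \<sigma> p" if "p \<in> set ps" for p
    using that by (intro rsubst_cong) (auto simp: \<sigma>'_def)
  then have "map (rsubst \<sigma>') ps = ts" using \<sigma> by (metis map_eq_conv)
  moreover have "is_cterm g ca (\<sigma>' x)" for x
    using w0 \<sigma> assms(2) is_cterm_rsubst_var by (fastforce simp: \<sigma>'_def)
  ultimately have "cbv_step g ca R (Fun f ts) (rsubst \<sigma>' r)"
    using cbv_step.root[OF assms(3), where \<sigma> = \<sigma>'] by auto
  with assms(1) show False unfolding rnormal_def by blast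
qed

lemma red_fun_term_bot:
  assumes "rnormal g ca R (Fun f ts)" "length ts = fa f"
  shows "\<exists>b. red_le b (apps (fun_term f) (map result ts)) (bot_term g)"
proof -
  let ?vs = "map result ts"
  have enter: "red (Suc (fa f)) (apps (fun_term f) ?vs) (inst (fun_env ?vs) 0 (fun_body f))"
    using assms(2) closed_value_result by (intro red_fun_term_enter) auto
  have "\<exists>b. red_le b (inst (fun_env ?vs) 0 (fun_body f)) (bot_term g)"
  proof (cases "\<forall>t\<in>set ts. is_cterm g ca t")
    case True
    have "\<forall>(f', ps, r)\<in>set (rules_of f). \<not> list_all2 matches ps ts"
      using rnormal_no_matching_rule[OF assms(1) True] by (auto simp: rules_of_def)
    moreover have "\<forall>\<rho>\<in>set (rules_of f). \<rho> \<in> set R \<and> fst \<rho> = f" by (simp add: rules_of_def)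
    ultimately obtain b where "red_le b (inst (thunk_env (fun_env (map (scott g) ts)) (fa f)) 0
                           (rules_code (fa f) (fa f) (rules_of f))) (bot_term g)"
      using red_rules_code_bot[OF _ assms(2) True] by blast
    then show ?thesis
      using red_le_trans red_fun_body_rules[OF assms(2) True] map_result_cterms[OF True] by metis
  next
    case False
    then obtain i where "i < fa f" "\<not> is_cterm g ca (ts ! i)" using assms(2) by (auto simp: in_set_conv_nth)
    moreover have "closed_value_env (env_cons dispatcher dummy_env)"
      using closed_dispatcher by (intro closed_value_env_cons closed_value_env_dummy)
    ultimately show ?thesis
      using red_check_args_bot[OF _ assms(2), of _ "[0..<fa f]" 0] by (force simp: fun_body_def fun_env_def)
  qed
  then show ?thesis using enter by (auto intro: red_le_trans red_le_red)
qed

definition con_cost :: nat where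
  "con_cost = Suc arity_sum * case_cost"

definition step_cost :: nat where
  "step_cost = rule_cost + con_cost * size_bound"

lemma repr_cterm_red: "repr M t p \<Longrightarrow> is_cterm g ca t \<Longrightarrow> red_le (con_cost * p) M (scott g t)"
proof (induction rule: repr.induct)
  case (repr_con c ts Ms ps)
  have "red_le (sum_list (map ((*) con_cost) ps)) (apps (con_code c) Ms) (apps (con_code c) (map (scott g) ts))"
    using repr_con by (intro red_le_apps_args) auto
  from red_le_trans[OF this red_con_code_scott[of c ts]] repr_con show ?case
    by (simp add: con_cost_def sum_list_const_mult algebra_simps)
qed (auto simp: red_le_refl)

lemma repr_normal_red: "repr M t p \<Longrightarrow> rnormal g ca R t \<Longrightarrow> \<exists>b. red_le b M (result t)"
proof (induction rule: repr.induct)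
  case (repr_scott t)
  then show ?case by (auto simp: result_def red_le_refl)
next
  case (repr_con c ts Ms ps)
  then have "\<exists>b. red_le b (apps (con_code c) Ms) (apps (con_code c) (map result ts))"
    using rnormal_arg(1) by (intro red_le_apps_args_ex) auto
  moreover have "\<exists>b. red_le b (apps (con_code c) (map result ts)) (result (Con c ts))"
  proof (cases "\<forall>t\<in>set ts. is_cterm g ca t")
    case True
    then show ?thesis
      using red_con_code_scott repr_con(1,2) by (auto simp: map_result_cterms result_def)
  next
    case False
    then show ?thesis using red_con_code_bot[OF repr_con(2)] by (auto simp: result_def)
  qed
  ultimately show ?case by (auto intro: red_le_trans)
next
  case (repr_fun f ts Ms ps)
  then have "\<exists>b. red_le b (apps (fun_term f) Ms) (apps (fun_term f) (map result ts))"
    using rnormal_arg(2) by (intro red_le_apps_args_ex) auto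
  moreover have "\<exists>b. red_le b (apps (fun_term f) (map result ts)) (result (Fun f ts))"
    using red_fun_term_bot[OF repr_fun.prems repr_fun(2)] by (simp add: result_def)
  ultimately show ?case by (auto intro: red_le_trans)
qed

lemma repr_args_step:
  assumes "\<forall>k<length ts. repr (Ms ! k) (ts ! k) (qs ! k)" "length Ms = length ts" "length qs = length ts"
    and "i < length ts" "j + con_cost * p' \<le> step_cost + con_cost * (qs ! i)" "red j (Ms ! i) M'" "repr M' t' p'"
  shows "red j (apps H Ms) (apps H (Ms[i := M']))"
    and "\<forall>k<length (ts[i := t']). repr (Ms[i := M'] ! k) (ts[i := t'] ! k) (qs[i := p'] ! k)"
    and "j + con_cost * sum_list (qs[i := p']) \<le> step_cost + con_cost * sum_list qs"
proof -
  show "red j (apps H Ms) (apps H (Ms[i := M']))"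
    using red_apps_arg assms(2,4,6) by simp
  show "\<forall>k<length (ts[i := t']). repr (Ms[i := M'] ! k) (ts[i := t'] ! k) (qs[i := p'] ! k)"
    using assms(1-4,7) by (simp add: nth_list_update)
  have "sum_list (qs[i := p']) + qs ! i = sum_list qs + p'"
    using sum_list_update[of i qs p'] elem_le_sum_list[of i qs] assms(3,4) by simp
  then have "con_cost * sum_list (qs[i := p']) + con_cost * (qs ! i) = con_cost * sum_list qs + con_cost * p'"
    by (metis distrib_left)
  with assms(5) show "j + con_cost * sum_list (qs[i := p']) \<le> step_cost + con_cost * sum_list qs"
    by linarith
qed

text \<open>One rewrite step costs at most \<open>step_cost\<close> \<open>\<beta>\<^sub>v\<close>-steps, up to the change of potential:
  contracting a redex first evaluates its (constructor) arguments, paid for by their potential,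
  and then creates at most \<open>size_bound\<close> new pending constructors.\<close>

lemma repr_root_step:
  assumes "(f, ps, r) \<in> set R" "\<forall>x. is_cterm g ca (\<sigma> x)" "repr M (Fun f (map (rsubst \<sigma>) ps)) p"
  shows "\<exists>j M' p'. 0 < j \<and> j + con_cost * p' \<le> step_cost + con_cost * p \<and> red j M M' \<and> repr M' (rsubst \<sigma> r) p'"
proof -
  let ?ws = "map (rsubst \<sigma>) ps"
  have ws: "\<forall>w\<in>set ?ws. is_cterm g ca w"
    using wf_rule_R[OF assms(1)] assms(2) is_cterm_rsubst by (fastforce simp: wf_rule_def)
  obtain Ms qs where M: "M = apps (fun_term f) Ms" "p = sum_list qs" "length Ms = length ?ws"
      "length qs = length ?ws" "\<forall>i<length ?ws. repr (Ms ! i) (?ws ! i) (qs ! i)"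
    using assms(3) by (cases rule: repr.cases) auto
  have "red_le (sum_list (map ((*) con_cost) qs)) M (apps (fun_term f) (map (scott g) ?ws))"
    unfolding M(1) using M(3-5) ws by (intro red_le_apps_args) (auto intro: repr_cterm_red)
  then obtain j1 where j1: "j1 \<le> con_cost * p" "red j1 M (apps (fun_term f) (map (scott g) ?ws))"
    unfolding red_le_def M(2) by (auto simp: sum_list_const_mult)
  obtain j M' p' where j: "0 < j" "j \<le> rule_cost" "red j (apps (fun_term f) (map (scott g) ?ws)) M'"
      "repr M' (rsubst \<sigma> r) p'" "p' \<le> size_bound"
    using red_fun_term_rule[OF assms(1) ws refl] by blast
  have "con_cost * p' \<le> con_cost * size_bound" using j(5) by simp
  then have "j1 + j + con_cost * p' \<le> step_cost + con_cost * p"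
    using j1(1) j(2) unfolding step_cost_def by linarith
  then show ?thesis using relpowp_trans[OF j1(2) j(3)] j(1,4) by (intro exI[of _ "j1 + j"]) auto
qed

lemma repr_step:
  "cbv_step g ca R t t' \<Longrightarrow> repr M t p \<Longrightarrow>
   \<exists>j M' p'. 0 < j \<and> j + con_cost * p' \<le> step_cost + con_cost * p \<and> red j M M' \<and> repr M' t' p'"
proof (induction arbitrary: M p rule: cbv_step.induct)
  case (root f ps r \<sigma>)
  then show ?case by (rule repr_root_step)
next
  case (ctxt_con i ts t' c)
  have "\<not> is_cterm g ca (Con c ts)" using cterm_no_step[OF ctxt_con(2)] ctxt_con(1) by auto
  with ctxt_con.prems obtain Ms qs where M: "M = apps (con_code c) Ms" "p = Suc (sum_list qs)" "c < g" "length ts = ca c"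
      "length Ms = length ts" "length qs = length ts" "\<forall>k<length ts. repr (Ms ! k) (ts ! k) (qs ! k)"
    by (cases rule: repr.cases) auto
  obtain j Mi pi where "0 < j" "j + con_cost * pi \<le> step_cost + con_cost * (qs ! i)" "red j (Ms ! i) Mi" "repr Mi t' pi"
    using ctxt_con.IH M(7) ctxt_con(1) by blast
  note args = repr_args_step[OF M(7,5,6) ctxt_con(1) this(2-4)]
  have "repr (apps (con_code c) (Ms[i := Mi])) (Con c (ts[i := t'])) (Suc (sum_list (qs[i := pi])))"
    using args(2) M by (intro repr.repr_con) auto
  with args(1,3) \<open>0 < j\<close> show ?case unfolding M(1,2)
    by (intro exI[of _ j] exI[of _ "apps (con_code c) (Ms[i := Mi])"] exI[of _ "Suc (sum_list (qs[i := pi]))"]) auto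
next
  case (ctxt_fun i ts t' f)
  obtain Ms qs where M: "M = apps (fun_term f) Ms" "p = sum_list qs" "f < h" "length ts = fa f"
      "length Ms = length ts" "length qs = length ts" "\<forall>k<length ts. repr (Ms ! k) (ts ! k) (qs ! k)"
    using ctxt_fun.prems by (cases rule: repr.cases) auto
  obtain j Mi pi where "0 < j" "j + con_cost * pi \<le> step_cost + con_cost * (qs ! i)" "red j (Ms ! i) Mi" "repr Mi t' pi"
    using ctxt_fun.IH M(7) ctxt_fun(1) by blast
  note args = repr_args_step[OF M(7,5,6) ctxt_fun(1) this(2-4)]
  have "repr (apps (fun_term f) (Ms[i := Mi])) (Fun f (ts[i := t'])) (sum_list (qs[i := pi]))"
    using args(2) M by (intro repr.repr_fun) auto
  with args(1,3) \<open>0 < j\<close> show ?case unfolding M(1,2)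
    by (intro exI[of _ j] exI[of _ "apps (fun_term f) (Ms[i := Mi])"] exI[of _ "sum_list (qs[i := pi])"]) auto
qed

lemma repr_steps:
  "(cbv_step g ca R ^^ n) t v \<Longrightarrow> repr M t p \<Longrightarrow>
   \<exists>j M' p'. j + con_cost * p' \<le> step_cost * n + con_cost * p \<and> red j M M' \<and> repr M' v p'"
proof (induction n arbitrary: v)
  case 0
  then show ?case by (intro exI[of _ 0] exI[of _ M] exI[of _ p]) auto
next
  case (Suc n)
  then obtain u where u: "(cbv_step g ca R ^^ n) t u" "cbv_step g ca R u v" by (auto elim: relpowp_Suc_E)
  obtain j M1 p1 where "j + con_cost * p1 \<le> step_cost * n + con_cost * p" "red j M M1" "repr M1 u p1"
    using Suc.IH[OF u(1) Suc.prems(2)] by blast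
  moreover obtain j' M2 p2 where "j' + con_cost * p2 \<le> step_cost + con_cost * p1" "red j' M1 M2" "repr M2 v p2"
    using repr_step[OF u(2) \<open>repr M1 u p1\<close>] by blast
  ultimately show ?case
    by (intro exI[of _ "j + j'"] exI[of _ M2] exI[of _ p2]) (auto intro: relpowp_trans)
qed

lemma repr_fun_call:
  "f < h \<Longrightarrow> length ts = fa f \<Longrightarrow> \<forall>t\<in>set ts. is_cterm g ca t \<Longrightarrow> repr (apps (fun_term f) (map (scott g) ts)) (Fun f ts) 0"
proof -
  assume "f < h" "length ts = fa f" "\<forall>t\<in>set ts. is_cterm g ca t"
  moreover from this have "\<forall>i<length ts. repr (map (scott g) ts ! i) (ts ! i) (replicate (length ts) 0 ! i)"
    by (auto intro: repr.repr_scott)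
  ultimately show ?thesis
    using repr.repr_fun[of f ts "map (scott g) ts" "replicate (length ts) 0"] by (simp add: sum_list_replicate)
qed

lemma fun_term_reaches_value:
  assumes "f < h" "length ts = fa f" "\<forall>t\<in>set ts. is_cterm g ca t"
    and "(cbv_step g ca R ^^ n) (Fun f ts) v" "is_cterm g ca v"
  shows "\<exists>j\<le>step_cost * n. red j (apps (fun_term f) (map (scott g) ts)) (scott g v)"
proof -
  obtain j M p where "j + con_cost * p \<le> step_cost * n" "red j (apps (fun_term f) (map (scott g) ts)) M" "repr M v p"
    using repr_steps[OF assms(4) repr_fun_call[OF assms(1-3)]] by auto
  moreover obtain j' where "j' \<le> con_cost * p" "red j' M (scott g v)"
    using repr_cterm_red[OF \<open>repr M v p\<close> assms(5)] unfolding red_le_def by blast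
  ultimately show ?thesis by (intro exI[of _ "j + j'"]) (auto intro: relpowp_trans)
qed

lemma fun_term_reaches_bot:
  assumes "f < h" "length ts = fa f" "\<forall>t\<in>set ts. is_cterm g ca t"
    and "(cbv_step g ca R)\<^sup>*\<^sup>* (Fun f ts) v" "rnormal g ca R v" "\<not> is_cterm g ca v"
  shows "beta_v\<^sup>*\<^sup>* (apps (fun_term f) (map (scott g) ts)) (bot_term g)"
proof -
  obtain n where "(cbv_step g ca R ^^ n) (Fun f ts) v" using assms(4) rtranclp_imp_relpowp by metis
  from repr_steps[OF this repr_fun_call[OF assms(1-3)]]
  obtain j M p where "red j (apps (fun_term f) (map (scott g) ts)) M" "repr M v p" by blast
  moreover obtain j' where "red j' M (bot_term g)"
    using repr_normal_red[OF \<open>repr M v p\<close> assms(5)] assms(6) unfolding red_le_def result_def by auto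
  ultimately show ?thesis by (meson relpowp_imp_rtranclp relpowp_trans)
qed

lemma fun_term_diverges:
  assumes "f < h" "length ts = fa f" "\<forall>t\<in>set ts. is_cterm g ca t"
    and "s 0 = Fun f ts" "\<forall>i. cbv_step g ca R (s i) (s (Suc i))"
  shows "\<exists>s'. s' 0 = apps (fun_term f) (map (scott g) ts) \<and> (\<forall>i. beta_v (s' i) (s' (Suc i)))"
proof (rule relpowp_infinite_chain[where P = "\<lambda>M. \<exists>s p. repr M (s 0) p \<and> (\<forall>i. cbv_step g ca R (s i) (s (Suc i)))"])
  show "\<exists>s p. repr (apps (fun_term f) (map (scott g) ts)) (s 0) p \<and> (\<forall>i. cbv_step g ca R (s i) (s (Suc i)))"
    using repr_fun_call[OF assms(1-3)] assms(4,5) by (intro exI[of _ s] exI[of _ 0]) auto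
next
  fix M assume "\<exists>s p. repr M (s 0) p \<and> (\<forall>i. cbv_step g ca R (s i) (s (Suc i)))"
  then obtain s p where s: "repr M (s 0) p" "\<forall>i. cbv_step g ca R (s i) (s (Suc i))" by blast
  then obtain j M' p' where "0 < j" "red j M M'" "repr M' (s 1) p'"
    using repr_step[of "s 0" "s 1" M p] by auto
  with s(2) show "\<exists>M' j. 0 < j \<and> red j M M' \<and> (\<exists>s p. repr M' (s 0) p \<and> (\<forall>i. cbv_step g ca R (s i) (s (Suc i))))"
    by (intro exI[of _ M'] exI[of _ j] conjI exI[of _ "\<lambda>i. s (Suc i)"] exI[of _ p']) auto
qed

end

lemma Fun_Nil_normal_without_cterms:
  assumes "\<nexists>w :: 'v rterm. is_cterm g ca w"
  shows "rnormal g ca R (Fun f ([] :: 'v rterm list))"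
  unfolding rnormal_def
proof
  assume "\<exists>t'. cbv_step g ca R (Fun f ([] :: 'v rterm list)) t'"
  then obtain t' where "cbv_step g ca R (Fun f ([] :: 'v rterm list)) t'" ..
  then show False
    by (cases rule: cbv_step.cases) (use assms in auto)
qed

theorem theorem2:
  fixes g h :: nat and ca fa :: "nat \<Rightarrow> nat" and R :: "'v rule list"
  assumes "constructor_trs g h ca fa R"
    and "orthogonal R"
  shows "\<exists>(F :: nat \<Rightarrow> lterm) (k :: nat). \<forall>f < h. \<forall>ts :: 'v rterm list.
     length ts = fa f \<and> (\<forall>t\<in>set ts. is_cterm g ca t) \<longrightarrow>
     (let u = Fun f ts; M = apps (F f) (map (scott g) ts) in
       (\<forall>v n. (cbv_step g ca R ^^ n) u v \<and> is_cterm g ca v \<longrightarrow>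
          (\<exists>j \<le> k * n. (beta_v ^^ j) M (scott g v))) \<and>
       (\<forall>v. (cbv_step g ca R)\<^sup>*\<^sup>* u v \<and> rnormal g ca R v \<and> \<not> is_cterm g ca v \<longrightarrow>
          beta_v\<^sup>*\<^sup>* M (bot_term g)) \<and>
       ((\<exists>s. s 0 = u \<and> (\<forall>i. cbv_step g ca R (s i) (s (Suc i)))) \<longrightarrow>
          (\<exists>s. s 0 = M \<and> (\<forall>i. beta_v (s i) (s (Suc i))))))"
proof (cases "\<exists>w :: 'v rterm. is_cterm g ca w")
  case True
  then interpret orthogonal_constructor_trs g ca h fa R
    using assms by unfold_locales
  show ?thesis
    using fun_term_reaches_value fun_term_reaches_bot fun_term_diverges
    by (intro exI[of _ fun_term] exI[of _ step_cost]) (auto simp: Let_def)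
next
  case False
  text \<open>Then every call on constructor terms has no arguments and is a normal form, so
    \<open>\<bottom>\<close> with \<open>k = 0\<close> will do.\<close>
  have no_step: "\<not> cbv_step g ca R (Fun f []) t" for f and t :: "'v rterm"
    using Fun_Nil_normal_without_cterms[OF False] unfolding rnormal_def by blast
  then have no_chain: "\<not> (\<exists>s. s 0 = Fun f ([] :: 'v rterm list) \<and> (\<forall>i. cbv_step g ca R (s i) (s (Suc i))))" for f
    by metis
  have only_nil: "(\<forall>t\<in>set ts. is_cterm g ca t) \<longleftrightarrow> ts = []" for ts :: "'v rterm list"
    using False by (cases ts) auto
  show ?thesis
    using False no_chain by (intro exI[of _ "\<lambda>_. bot_term g"] exI[of _ 0]) (simp add: only_nil Let_def, blast)
qed

end
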